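(* Let $m,n\ge 1$, $k=\min(m,n)$, and let $M^\star\in\mathbb{R}^{m\times n}$ have singular value decomposition $M^\star=P\Sigma Q^\top$ with $P\in\mathbb{R}^{m\times k}$, $Q\in\mathbb{R}^{n\times k}$ having orthonormal columns $p_i,q_i$ and $\Sigma=\mathrm{diag}(\sigma_1,\dots,\sigma_k)$ with $\sigma_1>\sigma_2>\cdots>\sigma_k>0$. For $r\in\{1,\dots,k\}$ let $A_r=\sum_{i=1}^r\sigma_ip_iq_i^\top$, and for $U\in\mathbb{R}^{m\times k}$, $V\in\mathbb{R}^{n\times k}$ let $$\mathcal{E}(U,V,r)=\min_{S_r\subseteq\{1,\dots,k\},\,|S_r|=r}\bigl\|U\Pi_{S_r}V^\top-A_r\bigr\|_F^2,$$ where $\Pi_S$ is the $k\times k$ diagonal matrix with $(\Pi_S)_{ii}=1$ if $i\in S$ and $0$ otherwise. Let $(U,V)$ be any minimizer of $$\frac{1}{2^k-1}\sum_{\emptyset\neq S\subseteq\{1,\dots,k\}}\bigl\|U\Pi_SV^\top-M^\star\bigr\|_F^2,$$ and let $\lambda=\frac1k\|UV^\top\|_\star$. Then for every $r\in\{1,\dots,k\}$, $$\mathcal{E}(U,V,r)\ge\frac1k\Bigl(r\lambda-\sum_{i=1}^r\sigma_i\Bigr)^2.$$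
   Context: $\|\cdot\|_F$ is the Frobenius norm and $\|\cdot\|_\star$ the nuclear norm (sum of singular values). *)

theory Defs
  imports "Jordan_Normal_Form.Char_Poly"
begin

definition frob_sq :: "real mat \<Rightarrow> real" where
  "frob_sq A = (\<Sum>i<dim_row A. \<Sum>j<dim_col A. (A $$ (i,j))^2)"

(* nuclear norm: sum of the singular values, i.e. of the square roots of the
   eigenvalues of A^T A counted with algebraic multiplicity *)
definition nuclear_norm :: "real mat \<Rightarrow> real" where
  "nuclear_norm A =
     (let p = char_poly (transpose_mat A * A) in
      \<Sum>x\<in>{x. poly p x = 0}. of_nat (order x p) * sqrt x)"

definition Pi_sel :: "nat \<Rightarrow> nat set \<Rightarrow> real mat" where
  "Pi_sel k S = mat k k (\<lambda>(i,j). if i = j \<and> i \<in> S then 1 else 0)"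

definition diag_of :: "nat \<Rightarrow> (nat \<Rightarrow> real) \<Rightarrow> real mat" where
  "diag_of k \<sigma> = mat k k (\<lambda>(i,j). if i = j then \<sigma> i else 0)"

(* A_r = sum_{i<r} sigma_i p_i q_i^T  (0-indexed) *)
definition trunc_approx :: "real mat \<Rightarrow> real mat \<Rightarrow> (nat \<Rightarrow> real) \<Rightarrow> nat \<Rightarrow> real mat" where
  "trunc_approx P Q \<sigma> r =
     mat (dim_row P) (dim_row Q) (\<lambda>(i,j). \<Sum>l<r. \<sigma> l * P $$ (i,l) * Q $$ (j,l))"

definition dropout_loss :: "nat \<Rightarrow> real mat \<Rightarrow> real mat \<Rightarrow> real mat \<Rightarrow> real" where
  "dropout_loss k M U V =
     (1 / (2 ^ k - 1)) * (\<Sum>S\<in>Pow {0..<k} - {{}}. frob_sq (U * Pi_sel k S * transpose_mat V - M))"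

definition err_E :: "nat \<Rightarrow> real mat \<Rightarrow> real mat \<Rightarrow> real mat \<Rightarrow> nat \<Rightarrow> real" where
  "err_E k U V A r =
     Min {frob_sq (U * Pi_sel k S * transpose_mat V - A) | S. S \<subseteq> {0..<k} \<and> card S = r}"

end

(*
  The dropout objective splits into a data-fit term that depends only on X = U V^T and a
  positive multiple of R(U,V) = sum_l |u_l|^2 |v_l|^2 over the columns of U and V.
  Any X with a compact SVD X = sum_{j in J} s_j e_j f_j^T, |J| <= k, can be rewritten as
  k rank-one terms with |u_l| |v_l| = |X|_*/k for every l, by repeatedly rotating a pair
  of terms whose norms lie on either side of the mean; hence at a minimiser
  R(U,V) <= k lambda^2 with lambda = |X|_*/k. By Bessel's inequality
  sum_l |u_l| |v_l| >= sum_l sum_j <e_j,u_l> <f_j,v_l> = |X|_* = k lambda, and the two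
  bounds force |u_l| |v_l| = sum_j <e_j,u_l> <f_j,v_l> = lambda for every column l.

  For a selection S of r columns, testing the residual U Pi_S V^T - A_r against the pairs
  (e_j, f_j) shows that it has mass at least r lambda - sum_{i<r} sigma_i, and testing it
  against (p_i, q_i) shows mass at least sum_{i<r} sigma_i - r lambda; by Cauchy-Schwarz
  over at most k orthonormal test pairs either bound yields the Frobenius estimate.
  The nuclear norm, defined via the characteristic polynomial of X^T X, is evaluated
  through an orthogonal diagonalisation of X^T X (spectral theorem by Householder
  deflation).
*)

theory Submission
  imports Defs
begin

section \<open>Spectral theorem for real symmetric matrices\<close>

lemma real_sym_mat_eigenvalue_real:
  fixes A :: "real mat" and w :: "complex vec"
  assumes A: "A \<in> carrier_mat n n" and sym: "transpose_mat A = A"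
    and w: "w \<in> carrier_vec n" "w \<noteq> 0\<^sub>v n" and eig: "map_mat complex_of_real A *\<^sub>v w = a \<cdot>\<^sub>v w"
  shows "cnj a = a"
proof -
  have Aw: "(\<Sum>j<n. of_real (A $$ (i,j)) * w $ j) = a * w $ i" if "i < n" for i
    using arg_cong[OF eig, of "\<lambda>x. x $ i"] that A w by (simp add: scalar_prod_def atLeast0LessThan)
  define s where "s = (\<Sum>i<n. cnj (w $ i) * (\<Sum>j<n. of_real (A $$ (i,j)) * w $ j))"
  define r where "r = (\<Sum>i<n. (cmod (w $ i))\<^sup>2)"
  \<comment> \<open>The Hermitian form \<open>w\<^sup>* A w = a |w|\<^sup>2\<close> is real because \<open>A\<close> is real symmetric.\<close>
  have "s = (\<Sum>i<n. a * (cnj (w $ i) * w $ i))"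
    unfolding s_def by (intro sum.cong refl) (simp add: Aw)
  also have "\<dots> = a * of_real r"
    unfolding r_def of_real_sum sum_distrib_left
    by (intro sum.cong refl) (simp add: complex_norm_square[symmetric] mult.commute)
  finally have s_eq: "s = a * of_real r" .
  have sym_entry: "A $$ (i,j) = A $$ (j,i)" if "i < n" "j < n" for i j
    using arg_cong[OF sym, of "\<lambda>M. M $$ (j,i)"] that A by auto
  have "cnj s = (\<Sum>i<n. \<Sum>j<n. w $ i * (of_real (A $$ (i,j)) * cnj (w $ j)))"
    unfolding s_def by (simp add: sum_distrib_left)
  also have "\<dots> = (\<Sum>j<n. \<Sum>i<n. w $ i * (of_real (A $$ (i,j)) * cnj (w $ j)))"
    by (rule sum.swap)
  also have "\<dots> = s"
    unfolding s_def sum_distrib_left by (intro sum.cong refl) (simp add: sym_entry mult.commute)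
  finally have s_real: "cnj s = s" .
  obtain i where i: "i < n" "w $ i \<noteq> 0" using w by (auto simp: vec_eq_iff)
  have "(cmod (w $ i))\<^sup>2 \<le> r" unfolding r_def using i by (intro member_le_sum) auto
  with i have "r > 0" by (smt (verit) zero_less_norm_iff zero_less_power2)
  moreover have "cnj a * of_real r = a * of_real r"
    using s_eq s_real by (metis complex_cnj_complex_of_real complex_cnj_mult)
  ultimately show "cnj a = a" by simp
qed

lemma sym_mat_char_poly_real_root:
  fixes A :: "real mat"
  assumes A: "A \<in> carrier_mat n n" and sym: "transpose_mat A = A" and n: "n > 0"
  shows "\<exists>\<mu>. poly (char_poly A) \<mu> = 0"
proof -
  let ?Ac = "map_mat complex_of_real A"
  have Ac: "?Ac \<in> carrier_mat n n" using A by simp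
  obtain as where cp: "char_poly ?Ac = (\<Prod>a\<leftarrow>as. [:- a, 1:])" and len: "length as = n"
    using char_poly_factorized[OF Ac] by blast
  from len n obtain a as' where as: "as = a # as'" by (cases as) auto
  have root: "poly (char_poly ?Ac) a = 0" unfolding cp as by simp
  hence "eigenvalue ?Ac a" using eigenvalue_root_char_poly[OF Ac] by simp
  then obtain w where "w \<in> carrier_vec n" "w \<noteq> 0\<^sub>v n" "?Ac *\<^sub>v w = a \<cdot>\<^sub>v w"
    using find_eigenvector[OF Ac] Ac unfolding eigenvector_def by blast
  hence "cnj a = a" by (rule real_sym_mat_eigenvalue_real[OF A sym])
  hence a: "a = of_real (Re a)" by (metis Reals_cnj_iff complex_is_Real_iff of_real_Re)
  have "char_poly ?Ac = map_poly of_real (char_poly A)" using of_real_hom.char_poly_hom[OF A] by simp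
  with root a have "poly (map_poly complex_of_real (char_poly A)) (of_real (Re a)) = 0" by simp
  hence "poly (char_poly A) (Re a) = 0" by (simp add: of_real_hom.poly_map_poly)
  thus ?thesis by blast
qed

lemma householder_mat_involution:
  fixes w :: "nat \<Rightarrow> real"
  assumes cw: "c * (\<Sum>l<N. w l * w l) = 2"
  defines "H \<equiv> mat N N (\<lambda>(i,j). (if i = j then 1 else 0) - c * w i * w j)"
  shows "transpose_mat H = H" "H * H = 1\<^sub>m N"
proof -
  show "transpose_mat H = H" unfolding H_def by (rule eq_matI) auto
  show "H * H = 1\<^sub>m N"
  proof (rule eq_matI)
    fix i j assume "i < dim_row (1\<^sub>m N)" "j < dim_col (1\<^sub>m N)"
    hence i: "i < N" and j: "j < N" by auto
    have "(H * H) $$ (i,j) = (\<Sum>l<N. ((if i = l then 1 else 0) - c * w i * w l) * ((if l = j then 1 else 0) - c * w l * w j))"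
      using i j unfolding H_def by (simp add: scalar_prod_def atLeast0LessThan)
    also have "\<dots> = (\<Sum>l<N. (if i = l then 1 else 0) * (if l = j then 1 else 0))
       - (\<Sum>l<N. (if i = l then 1 else 0) * (c * w l * w j))
       - (\<Sum>l<N. (if l = j then 1 else 0) * (c * w i * w l))
       + c * c * w i * w j * (\<Sum>l<N. w l * w l)"
      by (simp add: algebra_simps sum.distrib sum_subtractf sum_distrib_left)
    also have "\<dots> = (if i = j then 1 else 0) - c * w i * w j - c * w i * w j + c * w i * w j * (c * (\<Sum>l<N. w l * w l))"
      using i j by (simp add: if_distrib[of "\<lambda>x. x * _"] cong: if_cong)
    also have "\<dots> = (if i = j then 1 else 0)" unfolding cw by simp
    finally show "(H * H) $$ (i,j) = 1\<^sub>m N $$ (i,j)" using i j by simp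
  qed (auto simp: H_def)
qed

lemma householder_reflection_exists:
  fixes v :: "real vec"
  assumes v: "v \<in> carrier_vec N" and N: "N > 0" and unit: "v \<bullet> v = 1"
  shows "\<exists>H. H \<in> carrier_mat N N \<and> transpose_mat H = H \<and> H * H = 1\<^sub>m N \<and> col H 0 = v"
proof -
  have ss: "(\<Sum>i<N. (v $ i)\<^sup>2) = 1" using unit v by (simp add: scalar_prod_def atLeast0LessThan power2_eq_square)
  show ?thesis
  proof (cases "v $ 0 = 1")
    case True
    have "(\<Sum>i<N. (v $ i)\<^sup>2) = (v $ 0)\<^sup>2 + (\<Sum>i\<in>{..<N} - {0}. (v $ i)\<^sup>2)"
      using N by (subst sum.remove[of _ 0]) auto
    hence "(\<Sum>i\<in>{..<N} - {0}. (v $ i)\<^sup>2) = 0" using ss True by simp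
    hence "v $ i = 0" if "i < N" "i \<noteq> 0" for i
      using sum_nonneg_eq_0_iff[of "{..<N} - {0}" "\<lambda>i. (v $ i)\<^sup>2"] that by simp
    hence "col (1\<^sub>m N) 0 = v" using v N True by (auto intro!: eq_vecI)
    thus ?thesis by (intro exI[of _ "1\<^sub>m N"]) auto
  next
    case False
    \<comment> \<open>The reflection in the hyperplane orthogonal to \<open>v - e\<^sub>0\<close> swaps \<open>e\<^sub>0\<close> and \<open>v\<close>.\<close>
    define c where "c = 1 / (1 - v $ 0)"
    define w where "w i = v $ i - (if i = 0 then 1 else 0)" for i
    define H where "H = mat N N (\<lambda>(i,j). (if i = j then 1 else 0) - c * w i * w j)"
    have "(\<Sum>l<N. w l * w l) = (\<Sum>l<N. (v $ l)\<^sup>2 - 2 * (if l = 0 then v $ l else 0) + (if l = 0 then 1 else 0))"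
      unfolding w_def by (rule sum.cong) (auto simp: power2_eq_square algebra_simps)
    also have "\<dots> = 2 - 2 * v $ 0" using N ss by (simp add: sum.distrib sum_subtractf sum_distrib_left[symmetric])
    finally have "c * (\<Sum>l<N. w l * w l) = 2" unfolding c_def using False by (simp add: field_simps)
    note H_inv = householder_mat_involution[OF this, folded H_def]
    have "col H 0 = v"
    proof (rule eq_vecI)
      fix i assume "i < dim_vec v"
      hence i: "i < N" using v by auto
      have "col H 0 $ i = (if i = 0 then 1 else 0) - c * w i * w 0" unfolding H_def using i N by simp
      also have "\<dots> = v $ i" unfolding c_def w_def using False by (auto simp: field_simps)
      finally show "col H 0 $ i = v $ i" .
    qed (use v N in \<open>auto simp: H_def\<close>)
    thus ?thesis using H_inv by (intro exI[of _ H]) (auto simp: H_def)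
  qed
qed

lemma sym_mat_unit_eigenvector:
  fixes A :: "real mat"
  assumes A: "A \<in> carrier_mat n n" and sym: "transpose_mat A = A" and n: "n > 0"
  shows "\<exists>\<mu> v. v \<in> carrier_vec n \<and> v \<bullet> v = 1 \<and> A *\<^sub>v v = \<mu> \<cdot>\<^sub>v v"
proof -
  obtain \<mu> where "poly (char_poly A) \<mu> = 0" using sym_mat_char_poly_real_root[OF A sym n] by blast
  hence ev: "eigenvalue A \<mu>" using eigenvalue_root_char_poly[OF A] by simp
  define u where "u = find_eigenvector A \<mu>"
  have "eigenvector A u \<mu>" using find_eigenvector[OF A ev] u_def by simp
  hence u: "u \<in> carrier_vec n" and u0: "u \<noteq> 0\<^sub>v n" and eig: "A *\<^sub>v u = \<mu> \<cdot>\<^sub>v u"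
    unfolding eigenvector_def using A by auto
  have uu: "u \<bullet> u > 0"
    using conjugate_square_eq_0_vec[OF u] conjugate_square_ge_0_vec[of u] u0
    by (simp add: scalar_prod_def conjugate_vec_def order_le_neq_trans)
  define v where "v = (1 / sqrt (u \<bullet> u)) \<cdot>\<^sub>v u"
  have vc: "v \<in> carrier_vec n" unfolding v_def using u by simp
  have "v \<bullet> v = (1 / sqrt (u \<bullet> u))^2 * (u \<bullet> u)" unfolding v_def using u
    by (simp add: power2_eq_square)
  also have "\<dots> = 1" using uu by (simp add: power_divide)
  finally have vv: "v \<bullet> v = 1" .
  have "A *\<^sub>v v = \<mu> \<cdot>\<^sub>v v" unfolding v_def using A u eig
    by (simp add: mult_mat_vec smult_smult_assoc mult.commute)
  thus ?thesis using vc vv by blast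
qed

lemma sym_mat_deflate:
  fixes A H :: "real mat"
  assumes A: "A \<in> carrier_mat (Suc n) (Suc n)" and sym: "transpose_mat A = A"
    and H: "H \<in> carrier_mat (Suc n) (Suc n)" and HT: "transpose_mat H = H" and HH: "H * H = 1\<^sub>m (Suc n)"
    and eig: "A *\<^sub>v col H 0 = \<mu> \<cdot>\<^sub>v col H 0"
  shows "\<exists>B. B \<in> carrier_mat n n \<and> transpose_mat B = B \<and>
           H * A * H = four_block_mat (mat 1 1 (\<lambda>_. \<mu>)) (0\<^sub>m 1 n) (0\<^sub>m n 1) B"
proof -
  define A' where "A' = H * A * H"
  have A': "A' \<in> carrier_mat (Suc n) (Suc n)" unfolding A'_def using H A by simp
  have "transpose_mat A' = transpose_mat H * transpose_mat (H * A)"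
    unfolding A'_def using H A by (intro transpose_mult) auto
  also have "\<dots> = A'"
    unfolding A'_def using H A HT sym
    by (simp add: transpose_mult[OF H A] assoc_mult_mat[of _ "Suc n" "Suc n" _ "Suc n" _ "Suc n"])
  finally have A'T: "transpose_mat A' = A'" .
  have AH: "A * H \<in> carrier_mat (Suc n) (Suc n)" using A H by simp
  have Hc0: "col H 0 \<in> carrier_vec (Suc n)" using H col_dim[of H 0] by (metis carrier_matD(1) carrier_vecI)
  have "col A' 0 = col (H * (A * H)) 0"
    unfolding A'_def using H A by (simp add: assoc_mult_mat[of _ "Suc n" "Suc n" _ "Suc n" _ "Suc n"])
  also have "\<dots> = H *\<^sub>v (A *\<^sub>v col H 0)"
    using col_mult2[OF H AH, of 0] col_mult2[OF A H, of 0] by simp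
  also have "\<dots> = \<mu> \<cdot>\<^sub>v (H *\<^sub>v col H 0)"
    unfolding eig by (rule mult_mat_vec[OF H Hc0])
  also have "H *\<^sub>v col H 0 = col (H * H) 0"
    by (rule col_mult2[OF H H, symmetric]) simp
  finally have col0: "col A' 0 = \<mu> \<cdot>\<^sub>v unit_vec (Suc n) 0" unfolding HH by simp
  have A'_col0: "A' $$ (i,0) = (if i = 0 then \<mu> else 0)" if "i < Suc n" for i
    using arg_cong[OF col0, of "\<lambda>x. x $ i"] that A' by auto
  have A'_row0: "A' $$ (0,j) = (if j = 0 then \<mu> else 0)" if "j < Suc n" for j
    using arg_cong[OF A'T, of "\<lambda>M. M $$ (j,0)"] A'_col0[OF that] that A' by auto
  define B where "B = mat n n (\<lambda>(i,j). A' $$ (Suc i, Suc j))"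
  have A'_sym: "A' $$ (i,j) = A' $$ (j,i)" if "i < Suc n" "j < Suc n" for i j
    using arg_cong[OF A'T, of "\<lambda>M. M $$ (j,i)"] that A' by auto
  have "transpose_mat B = B"
    unfolding B_def by (intro eq_matI) (auto simp: A'_sym)
  moreover have "A' = four_block_mat (mat 1 1 (\<lambda>_. \<mu>)) (0\<^sub>m 1 n) (0\<^sub>m n 1) B"
  proof (rule eq_matI)
    fix i j assume "i < dim_row (four_block_mat (mat 1 1 (\<lambda>_. \<mu>)) (0\<^sub>m 1 n) (0\<^sub>m n 1) B)"
      and "j < dim_col (four_block_mat (mat 1 1 (\<lambda>_. \<mu>)) (0\<^sub>m 1 n) (0\<^sub>m n 1) B)"
    hence "i < Suc n" "j < Suc n" by (auto simp: B_def)
    thus "A' $$ (i, j) = four_block_mat (mat 1 1 (\<lambda>_. \<mu>)) (0\<^sub>m 1 n) (0\<^sub>m n 1) B $$ (i, j)"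
      using A'_col0 A'_row0 unfolding B_def by (cases i; cases j) auto
  qed (use A' in \<open>auto simp: B_def\<close>)
  ultimately show ?thesis unfolding A'_def by (intro exI[of _ B]) (auto simp: B_def)
qed

lemma four_block_orthogonal_conj:
  fixes W B :: "real mat"
  assumes W: "W \<in> carrier_mat n n" "transpose_mat W * W = 1\<^sub>m n" and B: "B \<in> carrier_mat n n"
  defines "F \<equiv> four_block_mat (1\<^sub>m 1) (0\<^sub>m 1 n) (0\<^sub>m n 1) W"
  shows "F \<in> carrier_mat (Suc n) (Suc n)" "transpose_mat F * F = 1\<^sub>m (Suc n)"
    "transpose_mat F * four_block_mat (mat 1 1 (\<lambda>_. \<mu>)) (0\<^sub>m 1 n) (0\<^sub>m n 1) B * F
       = four_block_mat (mat 1 1 (\<lambda>_. \<mu>)) (0\<^sub>m 1 n) (0\<^sub>m n 1) (transpose_mat W * B * W)"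
proof -
  show "F \<in> carrier_mat (Suc n) (Suc n)" unfolding F_def using W by auto
  have FT: "transpose_mat F = four_block_mat (1\<^sub>m 1) (0\<^sub>m 1 n) (0\<^sub>m n 1) (transpose_mat W)"
    unfolding F_def using W by (subst transpose_four_block_mat) auto
  note block_mult = mult_four_block_mat[of _ 1 1 _ n _ n _ _ 1 _ n]
  show "transpose_mat F * F = 1\<^sub>m (Suc n)"
    unfolding FT unfolding F_def using W by (subst block_mult) auto
  show "transpose_mat F * four_block_mat (mat 1 1 (\<lambda>_. \<mu>)) (0\<^sub>m 1 n) (0\<^sub>m n 1) B * F
      = four_block_mat (mat 1 1 (\<lambda>_. \<mu>)) (0\<^sub>m 1 n) (0\<^sub>m n 1) (transpose_mat W * B * W)"
    unfolding FT unfolding F_def using W B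
    by (subst block_mult, auto, subst block_mult, auto)
qed

theorem sym_mat_orthogonally_diagonalizable:
  fixes A :: "real mat"
  assumes "A \<in> carrier_mat n n" and "transpose_mat A = A"
  shows "\<exists>W. W \<in> carrier_mat n n \<and> transpose_mat W * W = 1\<^sub>m n \<and> diagonal_mat (transpose_mat W * A * W)"
  using assms
proof (induction n arbitrary: A)
  case 0
  thus ?case by (intro exI[of _ "1\<^sub>m 0"]) (auto simp: diagonal_mat_def)
next
  case (Suc n A)
  have A: "A \<in> carrier_mat (Suc n) (Suc n)" and sym: "transpose_mat A = A" by fact+
  obtain \<mu> v where v: "v \<in> carrier_vec (Suc n)" "v \<bullet> v = 1" and eig: "A *\<^sub>v v = \<mu> \<cdot>\<^sub>v v"
    using sym_mat_unit_eigenvector[OF A sym] by blast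
  obtain H where H: "H \<in> carrier_mat (Suc n) (Suc n)" and HT: "transpose_mat H = H"
    and HH: "H * H = 1\<^sub>m (Suc n)" and Hv: "col H 0 = v"
    using householder_reflection_exists[OF v(1) _ v(2)] by blast
  obtain B where B: "B \<in> carrier_mat n n" "transpose_mat B = B"
    and HAH: "H * A * H = four_block_mat (mat 1 1 (\<lambda>_. \<mu>)) (0\<^sub>m 1 n) (0\<^sub>m n 1) B"
    using sym_mat_deflate[OF A sym H HT HH] eig Hv by blast
  obtain W where W: "W \<in> carrier_mat n n" "transpose_mat W * W = 1\<^sub>m n"
    and diag: "diagonal_mat (transpose_mat W * B * W)"
    using Suc.IH[OF B] by blast
  define F where "F = four_block_mat (1\<^sub>m 1) (0\<^sub>m 1 n) (0\<^sub>m n 1) W"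
  note F = four_block_orthogonal_conj[OF W B(1), folded F_def]
  have HF_T: "transpose_mat (H * F) = transpose_mat F * H"
    using H F HT by (simp add: transpose_mult[of _ "Suc n" "Suc n"])
  have "transpose_mat (H * F) * (H * F) = transpose_mat F * (H * H) * F"
    unfolding HF_T using H F by (simp add: assoc_mult_mat[of _ "Suc n" "Suc n" _ "Suc n" _ "Suc n"])
  hence orth: "transpose_mat (H * F) * (H * F) = 1\<^sub>m (Suc n)" unfolding HH using F by simp
  have "transpose_mat (H * F) * A * (H * F) = transpose_mat F * (H * A * H) * F"
    unfolding HF_T using H F A by (simp add: assoc_mult_mat[of _ "Suc n" "Suc n" _ "Suc n" _ "Suc n"])
  hence "transpose_mat (H * F) * A * (H * F)
      = four_block_mat (mat 1 1 (\<lambda>_. \<mu>)) (0\<^sub>m 1 n) (0\<^sub>m n 1) (transpose_mat W * B * W)"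
    unfolding HAH F(3) .
  moreover have "diagonal_mat (four_block_mat (mat 1 1 (\<lambda>_. \<mu>)) (0\<^sub>m 1 n) (0\<^sub>m n 1) D)"
    if "D \<in> carrier_mat n n" "diagonal_mat D" for D
    using that unfolding diagonal_mat_def by (auto simp: less_Suc_eq_0_disj) blast
  ultimately have "diagonal_mat (transpose_mat (H * F) * A * (H * F))"
    using diag W B by simp
  with orth show ?case using H F by (intro exI[of _ "H * F"]) simp
qed

section \<open>Inner products, Bessel's inequality and bilinear forms\<close>

text \<open>Vectors of \<open>\<real>\<^sup>N\<close> are handled as functions on indices, of which only the values below \<open>N\<close>
  matter; this keeps matrix columns and singular vectors free of carrier side conditions.\<close>

definition ip :: "nat \<Rightarrow> (nat \<Rightarrow> real) \<Rightarrow> (nat \<Rightarrow> real) \<Rightarrow> real" where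
  "ip N f g = (\<Sum>i<N. f i * g i)"

definition orthonormal_on :: "nat \<Rightarrow> 'a set \<Rightarrow> ('a \<Rightarrow> nat \<Rightarrow> real) \<Rightarrow> bool" where
  "orthonormal_on N J f \<longleftrightarrow> (\<forall>j\<in>J. \<forall>j'\<in>J. ip N (f j) (f j') = (if j = j' then 1 else 0))"

abbreviation col_fun :: "'a mat \<Rightarrow> nat \<Rightarrow> nat \<Rightarrow> 'a" where
  "col_fun A l \<equiv> \<lambda>i. A $$ (i,l)"

lemma ip_cong:
  "(\<And>i. i < N \<Longrightarrow> f i = f' i) \<Longrightarrow> (\<And>i. i < N \<Longrightarrow> g i = g' i) \<Longrightarrow> ip N f g = ip N f' g'"
  unfolding ip_def by simp

lemma ip_commute: "ip N f g = ip N g f"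
  unfolding ip_def by (simp add: mult.commute)

lemma ip_self_nonneg: "ip N f f \<ge> 0"
  unfolding ip_def by (simp add: sum_nonneg)

lemma ip_zero [simp]: "ip N (\<lambda>_. 0) g = 0" "ip N f (\<lambda>_. 0) = 0"
  unfolding ip_def by simp_all

lemma ip_self_eq_0_iff: "ip N f f = 0 \<longleftrightarrow> (\<forall>i<N. f i = 0)"
  unfolding ip_def by (auto simp: sum_nonneg_eq_0_iff)

lemma ip_scale: "ip N (\<lambda>i. a * f i) (\<lambda>i. b * g i) = a * b * ip N f g"
  unfolding ip_def by (simp add: sum_distrib_left algebra_simps)

lemma ip_lincomb_left: "ip N (\<lambda>i. x * f i + y * g i) h = x * ip N f h + y * ip N g h"
  unfolding ip_def by (simp add: sum.distrib sum_distrib_left algebra_simps)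

lemma ip_lincomb_right: "ip N h (\<lambda>i. x * f i + y * g i) = x * ip N h f + y * ip N h g"
  unfolding ip_def by (simp add: sum.distrib sum_distrib_left algebra_simps)

lemma ip_lincomb_orthogonal:
  assumes "ip N f g = 0"
  shows "ip N (\<lambda>i. x * f i + y * g i) (\<lambda>i. x * f i + y * g i) = x\<^sup>2 * ip N f f + y\<^sup>2 * ip N g g"
  using assms by (simp add: ip_lincomb_left ip_lincomb_right ip_commute[of N g f] power2_eq_square algebra_simps)

lemma ip_diff_self: "ip N (\<lambda>i. a i - b i) (\<lambda>i. a i - b i) = ip N a a - 2 * ip N b a + ip N b b"
  unfolding ip_def by (simp add: algebra_simps sum_subtractf sum.distrib sum_distrib_left)

lemma orthonormal_on_cols:
  fixes P :: "real mat"
  assumes P: "P \<in> carrier_mat m k" and orth: "transpose_mat P * P = 1\<^sub>m k" and J: "J \<subseteq> {..<k}"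
  shows "orthonormal_on m J (col_fun P)"
  unfolding orthonormal_on_def
proof (intro ballI)
  fix t t' assume "t \<in> J" "t' \<in> J"
  with J have "t < k" "t' < k" by auto
  with arg_cong[OF orth, of "\<lambda>A. A $$ (t,t')"] P
  show "ip m (col_fun P t) (col_fun P t') = (if t = t' then 1 else 0)"
    by (simp add: ip_def scalar_prod_def atLeast0LessThan)
qed

lemma transpose_mult_self_index:
  fixes A :: "real mat"
  assumes "A \<in> carrier_mat m n" "j < n" "j' < n"
  shows "(transpose_mat A * A) $$ (j,j') = ip m (col_fun A j) (col_fun A j')"
  using assms by (simp add: ip_def scalar_prod_def atLeast0LessThan)

lemma Cauchy_Schwarz_ineq_sum:
  fixes a b :: "'a \<Rightarrow> real"
  shows "(\<Sum>j\<in>J. a j * b j)\<^sup>2 \<le> (\<Sum>j\<in>J. (a j)\<^sup>2) * (\<Sum>j\<in>J. (b j)\<^sup>2)"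
proof -
  have "0 \<le> (\<Sum>i\<in>J. \<Sum>j\<in>J. (a i * b j - a j * b i)\<^sup>2)" by (simp add: sum_nonneg)
  also have "\<dots> = (\<Sum>i\<in>J. \<Sum>j\<in>J. (a i)\<^sup>2 * (b j)\<^sup>2 + (a j)\<^sup>2 * (b i)\<^sup>2 - 2 * ((a i * b i) * (a j * b j)))"
    by (rule sum.cong, simp, rule sum.cong, simp, simp add: power2_eq_square algebra_simps)
  also have "\<dots> = (\<Sum>i\<in>J. \<Sum>j\<in>J. (a i)\<^sup>2 * (b j)\<^sup>2) + (\<Sum>i\<in>J. \<Sum>j\<in>J. (a j)\<^sup>2 * (b i)\<^sup>2)
      - 2 * (\<Sum>i\<in>J. \<Sum>j\<in>J. (a i * b i) * (a j * b j))"
    by (simp add: sum.distrib sum_subtractf sum_distrib_left)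
  also have "(\<Sum>i\<in>J. \<Sum>j\<in>J. (a i)\<^sup>2 * (b j)\<^sup>2) = (\<Sum>j\<in>J. (a j)\<^sup>2) * (\<Sum>j\<in>J. (b j)\<^sup>2)"
    by (simp add: sum_product)
  also have "(\<Sum>i\<in>J. \<Sum>j\<in>J. (a j)\<^sup>2 * (b i)\<^sup>2) = (\<Sum>j\<in>J. (a j)\<^sup>2) * (\<Sum>j\<in>J. (b j)\<^sup>2)"
    by (subst sum.swap, simp add: sum_product)
  also have "(\<Sum>i\<in>J. \<Sum>j\<in>J. (a i * b i) * (a j * b j)) = (\<Sum>j\<in>J. a j * b j)\<^sup>2"
    by (simp add: sum_product power2_eq_square)
  finally show ?thesis by simp
qed

lemma ip_Cauchy_Schwarz: "(ip N f g)\<^sup>2 \<le> ip N f f * ip N g g"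
  unfolding ip_def using Cauchy_Schwarz_ineq_sum[of f g "{..<N}"] by (simp add: power2_eq_square)

lemma Bessel_inequality:
  assumes fin: "finite J" and orth: "orthonormal_on N J f"
  shows "(\<Sum>j\<in>J. (ip N (f j) x)\<^sup>2) \<le> ip N x x"
proof -
  define c where "c j = ip N (f j) x" for j
  define y where "y i = x i - (\<Sum>j\<in>J. c j * f j i)" for i
  have cross: "ip N (\<lambda>i. \<Sum>j\<in>J. c j * f j i) g = (\<Sum>j\<in>J. c j * ip N (f j) g)" for g
    unfolding ip_def by (simp add: sum_distrib_right sum_distrib_left sum.swap[of _ J] mult.assoc)
  have proj: "ip N (\<lambda>i. \<Sum>j\<in>J. c j * f j i) (f j') = c j'" if "j' \<in> J" for j'
  proof -
    have "(\<Sum>j\<in>J. c j * ip N (f j) (f j')) = (\<Sum>j\<in>J. if j = j' then c j else 0)"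
      using orth that unfolding orthonormal_on_def by (intro sum.cong) auto
    thus ?thesis unfolding cross using fin that by simp
  qed
  have proj': "ip N (f j') (\<lambda>i. \<Sum>j\<in>J. c j * f j i) = c j'" if "j' \<in> J" for j'
    using proj[OF that] by (simp add: ip_commute)
  have "0 \<le> ip N y y" by (rule ip_self_nonneg)
  also have "ip N y y = ip N x x - 2 * (\<Sum>j\<in>J. c j * c j) + (\<Sum>j\<in>J. c j * c j)"
    unfolding y_def ip_diff_self cross
    by (simp add: proj' c_def[symmetric])
  finally show ?thesis unfolding c_def by (simp add: power2_eq_square)
qed

lemma Bessel_bilinear_le:
  assumes fin: "finite J" and orth_f: "orthonormal_on m J f" and orth_g: "orthonormal_on n J g"
  shows "(\<Sum>j\<in>J. ip m (f j) u * ip n (g j) v) \<le> sqrt (ip m u u) * sqrt (ip n v v)"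
proof -
  have "(\<Sum>j\<in>J. ip m (f j) u * ip n (g j) v)
      \<le> sqrt ((\<Sum>j\<in>J. (ip m (f j) u)\<^sup>2) * (\<Sum>j\<in>J. (ip n (g j) v)\<^sup>2))"
    by (rule real_le_rsqrt) (rule Cauchy_Schwarz_ineq_sum)
  also have "\<dots> \<le> sqrt (ip m u u * ip n v v)"
    by (intro real_sqrt_le_mono mult_mono Bessel_inequality fin orth_f orth_g ip_self_nonneg sum_nonneg)
      simp_all
  finally show ?thesis by (simp add: real_sqrt_mult)
qed

lemma orthonormal_on_card_le:
  assumes fin: "finite J" and orth: "orthonormal_on N J f"
  shows "card J \<le> N"
proof -
  define \<delta> where "\<delta> i = (\<lambda>t::nat. if t = i then 1 else 0 :: real)" for i :: nat
  have ip_\<delta>: "ip N g (\<delta> i) = g i" if "i < N" for g i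
    unfolding ip_def \<delta>_def using that by (simp add: if_distrib cong: if_cong)
  have "real (card J) = (\<Sum>j\<in>J. ip N (f j) (f j))" using orth unfolding orthonormal_on_def by simp
  also have "\<dots> = (\<Sum>i<N. \<Sum>j\<in>J. (ip N (f j) (\<delta> i))\<^sup>2)"
    unfolding ip_def[of N "f _" "f _"] by (subst sum.swap) (simp add: ip_\<delta> power2_eq_square)
  also have "\<dots> \<le> (\<Sum>i<N. ip N (\<delta> i) (\<delta> i))"
    by (intro sum_mono Bessel_inequality fin orth)
  also have "\<dots> = real N"
    using ip_\<delta>[of _ "\<delta> _"] by (simp add: \<delta>_def)
  finally show ?thesis by simp
qed

definition bilin :: "nat \<Rightarrow> nat \<Rightarrow> (nat \<Rightarrow> real) \<Rightarrow> (nat \<Rightarrow> nat \<Rightarrow> real) \<Rightarrow> (nat \<Rightarrow> real) \<Rightarrow> real" where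
  "bilin m n x Y y = (\<Sum>i<m. \<Sum>i'<n. x i * Y i i' * y i')"

lemma bilin_cong:
  "(\<And>i i'. i < m \<Longrightarrow> i' < n \<Longrightarrow> Y i i' = Z i i') \<Longrightarrow> bilin m n x Y y = bilin m n x Z y"
  unfolding bilin_def by simp

lemma bilin_diff: "bilin m n x (\<lambda>i i'. Y i i' - Z i i') y = bilin m n x Y y - bilin m n x Z y"
  unfolding bilin_def by (simp add: algebra_simps sum_subtractf)

lemma bilin_sum_outer:
  "bilin m n x (\<lambda>i i'. \<Sum>l\<in>L. \<kappa> l * w l i * z l i') y = (\<Sum>l\<in>L. \<kappa> l * (ip m x (w l) * ip n y (z l)))"
proof -
  have "bilin m n x (\<lambda>i i'. \<Sum>l\<in>L. \<kappa> l * w l i * z l i') y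
      = (\<Sum>i<m. \<Sum>i'<n. \<Sum>l\<in>L. \<kappa> l * (x i * w l i) * (y i' * z l i'))"
    unfolding bilin_def by (simp add: sum_distrib_left sum_distrib_right algebra_simps)
  also have "\<dots> = (\<Sum>i<m. \<Sum>l\<in>L. \<Sum>i'<n. \<kappa> l * (x i * w l i) * (y i' * z l i'))"
    by (intro sum.cong refl sum.swap)
  also have "\<dots> = (\<Sum>l\<in>L. \<Sum>i<m. \<Sum>i'<n. \<kappa> l * (x i * w l i) * (y i' * z l i'))"
    by (rule sum.swap)
  also have "\<dots> = (\<Sum>l\<in>L. \<kappa> l * (ip m x (w l) * ip n y (z l)))"
    unfolding ip_def by (intro sum.cong refl, simp only: sum_product, simp only: sum_distrib_left mult.assoc)
  finally show ?thesis .
qed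

lemma sum_bilin_square_le:
  assumes fin: "finite J" and orth_f: "orthonormal_on m J f" and orth_g: "orthonormal_on n J g"
  shows "(\<Sum>j\<in>J. bilin m n (f j) Y (g j))\<^sup>2 \<le> real (card J) * (\<Sum>i<m. \<Sum>i'<n. (Y i i')\<^sup>2)"
proof -
  define Yg where "Yg j i = (\<Sum>i'<n. Y i i' * g j i')" for j i
  have bilin_Yg: "bilin m n (f j) Y (g j) = ip m (f j) (Yg j)" for j
    unfolding bilin_def ip_def Yg_def by (simp add: sum_distrib_left mult.assoc)
  have "(\<Sum>j\<in>J. ip m (f j) (Yg j))\<^sup>2 \<le> real (card J) * (\<Sum>j\<in>J. (ip m (f j) (Yg j))\<^sup>2)"
    using Cauchy_Schwarz_ineq_sum[of "\<lambda>_. 1" _ J] by simp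
  also have "(\<Sum>j\<in>J. (ip m (f j) (Yg j))\<^sup>2) \<le> (\<Sum>j\<in>J. ip m (Yg j) (Yg j))"
  proof (rule sum_mono)
    fix j assume "j \<in> J"
    hence "ip m (f j) (f j) = 1" using orth_f unfolding orthonormal_on_def by auto
    thus "(ip m (f j) (Yg j))\<^sup>2 \<le> ip m (Yg j) (Yg j)" using ip_Cauchy_Schwarz[of m "f j" "Yg j"] by simp
  qed
  also have "(\<Sum>j\<in>J. ip m (Yg j) (Yg j)) = (\<Sum>i<m. \<Sum>j\<in>J. (ip n (g j) (\<lambda>i'. Y i i'))\<^sup>2)"
    unfolding ip_def Yg_def by (subst sum.swap) (simp add: power2_eq_square mult.commute)
  also have "\<dots> \<le> (\<Sum>i<m. \<Sum>i'<n. (Y i i')\<^sup>2)"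
    by (intro sum_mono order_trans[OF Bessel_inequality[OF fin orth_g]]) (simp add: ip_def power2_eq_square)
  finally show ?thesis unfolding bilin_Yg by (simp add: mult_left_mono)
qed

section \<open>Nuclear norm and compact singular value decomposition\<close>

lemma sum_roots_order_prod_linear:
  fixes ds :: "real list"
  defines "p \<equiv> \<Prod>a\<leftarrow>ds. [:- a, 1:]"
  shows "(\<Sum>x\<in>{x. poly p x = 0}. of_nat (order x p) * f x) = sum_list (map f ds)"
  unfolding p_def
proof (induction ds)
  case Nil
  thus ?case by simp
next
  case (Cons a ds)
  let ?p = "\<Prod>a\<leftarrow>ds. [:- a, 1:]"
  have p0: "?p \<noteq> 0" by (subst prod_list_zero_iff) auto
  have fin: "finite {x. poly ?p x = 0}" using poly_roots_finite[OF p0] .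
  have roots: "{x. poly (\<Prod>a\<leftarrow>a # ds. [:- a, 1:]) x = 0} = insert a {x. poly ?p x = 0}" by auto
  have order: "order x (\<Prod>a\<leftarrow>a # ds. [:- a, 1:]) = (if x = a then 1 else 0) + order x ?p" for x
  proof -
    have "[:- a, 1:] \<noteq> 0" by simp
    hence "[:- a, 1:] * ?p \<noteq> 0" using p0 mult_eq_0_iff by blast
    hence "order x ([:- a, 1:] * ?p) = order x [:- a, 1:] + order x ?p" by (rule order_mult)
    thus ?thesis by (simp add: order_linear')
  qed
  have "(\<Sum>x\<in>insert a {x. poly ?p x = 0}. of_nat (order x ?p) * f x)
      = (\<Sum>x\<in>{x. poly ?p x = 0}. of_nat (order x ?p) * f x)"
    using fin by (cases "poly ?p a = 0") (auto simp: insert_absorb order_0I)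
  moreover have "(\<Sum>x\<in>insert a {x. poly ?p x = 0}. of_nat (if x = a then 1 else 0) * f x) = f a"
    using fin by (subst sum.cong[OF refl, of _ _ "\<lambda>x. if x = a then f x else 0"]) auto
  ultimately show ?case
    unfolding roots order using fin Cons.IH by (simp add: sum.distrib distrib_right)
qed

lemma gram_orthogonally_diagonalizable:
  fixes X :: "real mat"
  assumes X: "X \<in> carrier_mat m n"
  shows "\<exists>W. W \<in> carrier_mat n n \<and> transpose_mat W * W = 1\<^sub>m n \<and>
           diagonal_mat (transpose_mat (X * W) * (X * W))"
proof -
  have "transpose_mat (transpose_mat X * X) = transpose_mat X * X"
    using X by (simp add: transpose_mult[of _ n m])
  then obtain W where W: "W \<in> carrier_mat n n" "transpose_mat W * W = 1\<^sub>m n"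
    and diag: "diagonal_mat (transpose_mat W * (transpose_mat X * X) * W)"
    using sym_mat_orthogonally_diagonalizable[of "transpose_mat X * X" n] X by auto
  have "transpose_mat (X * W) * (X * W) = transpose_mat W * (transpose_mat X * X) * W"
    using X W
    by (simp add: transpose_mult[OF X] assoc_mult_mat[of "transpose_mat W" n n "transpose_mat X * X" n W n]
        assoc_mult_mat[of "transpose_mat X" n m X n W n]
        assoc_mult_mat[of "transpose_mat W" n n "transpose_mat X" m "X * W" n])
  with W diag show ?thesis by auto
qed

lemma nuclear_norm_orthogonal_diag:
  fixes X W :: "real mat"
  assumes X: "X \<in> carrier_mat m n" and W: "W \<in> carrier_mat n n"
    and orth: "transpose_mat W * W = 1\<^sub>m n"
    and diag: "diagonal_mat (transpose_mat (X * W) * (X * W))"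
  shows "nuclear_norm X = (\<Sum>j<n. sqrt (ip m (col_fun (X * W) j) (col_fun (X * W) j)))"
proof -
  define G where "G = transpose_mat X * X"
  define D where "D = transpose_mat (X * W) * (X * W)"
  have G: "G \<in> carrier_mat n n" unfolding G_def using X by simp
  have D: "D \<in> carrier_mat n n" unfolding D_def using X W by (metis mult_carrier_mat transpose_carrier_mat)
  have orth': "W * transpose_mat W = 1\<^sub>m n"
    using mat_mult_left_right_inverse[OF _ W orth] W by simp
  have "D = transpose_mat W * G * W"
    unfolding D_def G_def
    using X W
    by (simp add: transpose_mult[OF X] assoc_mult_mat[of "transpose_mat W" n n "transpose_mat X * X" n W n]
        assoc_mult_mat[of "transpose_mat X" n m X n W n]
        assoc_mult_mat[of "transpose_mat W" n n "transpose_mat X" m "X * W" n])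
  hence "W * D * transpose_mat W = (W * transpose_mat W) * G * (W * transpose_mat W)"
    using W G by (simp add: assoc_mult_mat[of _ n n _ n _ n])
  hence "G = W * D * transpose_mat W" unfolding orth' using G by simp
  hence "similar_mat G D"
    unfolding similar_mat_def similar_mat_wit_def using G D W orth orth'
    by (intro exI[of _ W] exI[of _ "transpose_mat W"]) (auto simp: Let_def)
  moreover have "upper_triangular D"
    using diag unfolding D_def diagonal_mat_def upper_triangular_def by auto
  ultimately have "char_poly G = (\<Prod>a\<leftarrow>diag_mat D. [:- a, 1:])"
    using char_poly_similar char_poly_upper_triangular[OF D] by metis
  hence "nuclear_norm X = sum_list (map sqrt (diag_mat D))"
    unfolding nuclear_norm_def Let_def G_def[symmetric] by (simp add: sum_roots_order_prod_linear)
  also have "\<dots> = (\<Sum>j<n. sqrt (D $$ (j,j)))"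
    using D by (simp add: diag_mat_def sum_list_sum_nth atLeast0LessThan)
  finally show ?thesis
    unfolding D_def using transpose_mult_self_index[of "X * W" m n] X W by simp
qed

lemma mult_transpose_index:
  fixes U V :: "real mat"
  assumes "U \<in> carrier_mat m k" "V \<in> carrier_mat n k" "i < m" "j < n"
  shows "(U * transpose_mat V) $$ (i,j) = (\<Sum>l<k. U $$ (i,l) * V $$ (j,l))"
  using assms by (simp add: scalar_prod_def atLeast0LessThan)

definition compact_svd ::
  "real mat \<Rightarrow> nat set \<Rightarrow> (nat \<Rightarrow> real) \<Rightarrow> (nat \<Rightarrow> nat \<Rightarrow> real) \<Rightarrow> (nat \<Rightarrow> nat \<Rightarrow> real) \<Rightarrow> bool"
where
  "compact_svd X J s e f \<longleftrightarrow> finite J \<and> orthonormal_on (dim_row X) J e \<and> orthonormal_on (dim_col X) J f \<and>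
     (\<forall>j\<in>J. 0 < s j) \<and>
     (\<forall>i<dim_row X. \<forall>i'<dim_col X. X $$ (i,i') = (\<Sum>j\<in>J. s j * e j i * f j i'))"

lemma compact_svd_exists:
  fixes X :: "real mat"
  assumes X: "X \<in> carrier_mat m n"
  shows "\<exists>J s e f. compact_svd X J s e f \<and> card J \<le> min m n \<and> nuclear_norm X = (\<Sum>j\<in>J. s j)"
proof -
  obtain W where W: "W \<in> carrier_mat n n" and orth: "transpose_mat W * W = 1\<^sub>m n"
    and diag: "diagonal_mat (transpose_mat (X * W) * (X * W))"
    using gram_orthogonally_diagonalizable[OF X] by blast
  define Y where "Y = X * W"
  have Y: "Y \<in> carrier_mat m n" unfolding Y_def using X W by simp
  define d where "d j = ip m (col_fun Y j) (col_fun Y j)" for j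
  define J where "J = {j. j < n \<and> 0 < d j}"
  define s where "s j = sqrt (d j)" for j
  define e where "e j i = Y $$ (i,j) / s j" for j i
  have s_pos: "0 < s j" if "j \<in> J" for j using that unfolding J_def s_def by simp
  have Y_orth: "ip m (col_fun Y j) (col_fun Y j') = 0" if "j < n" "j' < n" "j \<noteq> j'" for j j'
    using diag that Y transpose_mult_self_index[OF Y] unfolding Y_def diagonal_mat_def by auto
  have d_zero: "d j = 0" if "j < n" "j \<notin> J" for j
    using that ip_self_nonneg[of m "col_fun Y j"] unfolding J_def d_def by auto
  have Y_zero: "Y $$ (i,j) = 0" if "j < n" "j \<notin> J" "i < m" for i j
    using d_zero[OF that(1,2)] that(3) unfolding d_def ip_self_eq_0_iff by simp
  have orth_e: "orthonormal_on m J e"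
    unfolding orthonormal_on_def
  proof (intro ballI)
    fix j j' assume j: "j \<in> J" and j': "j' \<in> J"
    have "ip m (e j) (e j') = ip m (col_fun Y j) (col_fun Y j') / (s j * s j')"
      unfolding e_def ip_def by (simp add: sum_divide_distrib)
    thus "ip m (e j) (e j') = (if j = j' then 1 else 0)"
      using Y_orth j j' unfolding J_def s_def d_def by (auto simp: real_sqrt_mult[symmetric])
  qed
  have orth_f: "orthonormal_on n J (col_fun W)" by (rule orthonormal_on_cols[OF W orth]) (auto simp: J_def)
  have "W * transpose_mat W = 1\<^sub>m n" using mat_mult_left_right_inverse[OF _ W orth] W by simp
  moreover have "Y * transpose_mat W = X * (W * transpose_mat W)"
    unfolding Y_def using X W by (simp add: assoc_mult_mat[of X m n W n "transpose_mat W" n])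
  ultimately have XY: "X = Y * transpose_mat W" using X by simp
  have "X $$ (i,i') = (\<Sum>j\<in>J. s j * e j i * W $$ (i',j))" if "i < m" "i' < n" for i i'
  proof -
    have "X $$ (i,i') = (\<Sum>j<n. Y $$ (i,j) * W $$ (i',j))"
      unfolding XY using mult_transpose_index[OF Y W that] .
    also have "\<dots> = (\<Sum>j\<in>J. Y $$ (i,j) * W $$ (i',j))"
      using Y_zero that by (intro sum.mono_neutral_right) (auto simp: J_def)
    also have "\<dots> = (\<Sum>j\<in>J. s j * e j i * W $$ (i',j))"
      using s_pos by (intro sum.cong refl) (simp add: e_def less_imp_neq[symmetric])
    finally show ?thesis .
  qed
  hence "compact_svd X J s e (col_fun W)"
    unfolding compact_svd_def using X orth_e orth_f s_pos by (auto simp: J_def)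
  moreover have "card J \<le> min m n"
    using orthonormal_on_card_le[OF _ orth_e] card_mono[of "{..<n}" J] by (auto simp: J_def)
  moreover have "nuclear_norm X = (\<Sum>j\<in>J. s j)"
  proof -
    have "nuclear_norm X = (\<Sum>j<n. s j)"
      unfolding nuclear_norm_orthogonal_diag[OF X W orth diag] Y_def[symmetric] d_def[symmetric] s_def ..
    also have "\<dots> = (\<Sum>j\<in>J. s j)"
      using d_zero by (intro sum.mono_neutral_right) (auto simp: J_def s_def)
    finally show ?thesis .
  qed
  ultimately show ?thesis by blast
qed

lemma compact_svd_sum_bilin:
  assumes svd: "compact_svd X J s e f"
  shows "(\<Sum>j\<in>J. bilin (dim_row X) (dim_col X) (e j) (\<lambda>i i'. X $$ (i,i')) (f j)) = (\<Sum>j\<in>J. s j)"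
proof (rule sum.cong[OF refl])
  fix j assume j: "j \<in> J"
  have "bilin (dim_row X) (dim_col X) (e j) (\<lambda>i i'. X $$ (i,i')) (f j)
      = bilin (dim_row X) (dim_col X) (e j) (\<lambda>i i'. \<Sum>j'\<in>J. s j' * e j' i * f j' i') (f j)"
    using svd unfolding compact_svd_def by (intro bilin_cong) auto
  also have "\<dots> = (\<Sum>j'\<in>J. s j' * (ip (dim_row X) (e j) (e j') * ip (dim_col X) (f j) (f j')))"
    by (rule bilin_sum_outer)
  also have "\<dots> = (\<Sum>j'\<in>J. if j' = j then s j else 0)"
    using svd j unfolding compact_svd_def orthonormal_on_def by (intro sum.cong) auto
  also have "\<dots> = s j" using svd j unfolding compact_svd_def by simp
  finally show "bilin (dim_row X) (dim_col X) (e j) (\<lambda>i i'. X $$ (i,i')) (f j) = s j" .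
qed

section \<open>Balancing rank-one decompositions\<close>

lemma exists_unit_pair_mixing:
  fixes a b \<mu> :: real
  assumes "b \<le> \<mu>" "\<mu> \<le> a" "b < a"
  shows "\<exists>\<alpha> \<beta>. \<alpha>\<^sup>2 + \<beta>\<^sup>2 = 1 \<and> \<alpha>\<^sup>2 * a + \<beta>\<^sup>2 * b = \<mu>"
proof -
  define t where "t = (\<mu> - b) / (a - b)"
  have t: "0 \<le> t" "t \<le> 1" using assms by (auto simp: t_def field_simps)
  have "t * (a - b) = \<mu> - b" unfolding t_def using assms by simp
  hence "t * a + (1 - t) * b = \<mu>" by (simp add: algebra_simps)
  with t show ?thesis by (intro exI[of _ "sqrt t"] exI[of _ "sqrt (1 - t)"]) simp
qed

lemma rotate_orthogonal_pair:
  fixes x y x' y' :: "nat \<Rightarrow> real"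
  assumes orth: "ip m x y = 0" "ip n x' y' = 0"
    and bal: "ip n x' x' = ip m x x" "ip n y' y' = ip m y y"
    and between: "ip m y y < \<mu>" "\<mu> < ip m x x"
  obtains u v z z' where "ip m u u = \<mu>" "ip n v v = \<mu>"
    "ip m z z = ip m x x + ip m y y - \<mu>" "ip n z' z' = ip m z z"
    "\<And>h. ip m h x = 0 \<Longrightarrow> ip m h y = 0 \<Longrightarrow> ip m h z = 0"
    "\<And>h. ip n h x' = 0 \<Longrightarrow> ip n h y' = 0 \<Longrightarrow> ip n h z' = 0"
    "\<And>i i'. u i * v i' + z i * z' i' = x i * x' i' + y i * y' i'"
proof -
  obtain \<alpha> \<beta> where unit: "\<alpha>\<^sup>2 + \<beta>\<^sup>2 = 1" and mix: "\<alpha>\<^sup>2 * ip m x x + \<beta>\<^sup>2 * ip m y y = \<mu>"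
    using exists_unit_pair_mixing[of "ip m y y" \<mu> "ip m x x"] between by auto
  have "(- \<beta>)\<^sup>2 * ip m x x + \<alpha>\<^sup>2 * ip m y y
      = (\<alpha>\<^sup>2 + \<beta>\<^sup>2) * (ip m x x + ip m y y) - (\<alpha>\<^sup>2 * ip m x x + \<beta>\<^sup>2 * ip m y y)"
    by (simp add: algebra_simps)
  hence rest: "(- \<beta>)\<^sup>2 * ip m x x + \<alpha>\<^sup>2 * ip m y y = ip m x x + ip m y y - \<mu>" unfolding unit mix by simp
  show ?thesis
  proof
    show "ip m (\<lambda>i. \<alpha> * x i + \<beta> * y i) (\<lambda>i. \<alpha> * x i + \<beta> * y i) = \<mu>"
      "ip n (\<lambda>i. \<alpha> * x' i + \<beta> * y' i) (\<lambda>i. \<alpha> * x' i + \<beta> * y' i) = \<mu>"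
      using ip_lincomb_orthogonal orth bal mix by simp_all
    show "ip m (\<lambda>i. (- \<beta>) * x i + \<alpha> * y i) (\<lambda>i. (- \<beta>) * x i + \<alpha> * y i) = ip m x x + ip m y y - \<mu>"
      unfolding ip_lincomb_orthogonal[OF orth(1)] by (rule rest)
    show "ip n (\<lambda>i. (- \<beta>) * x' i + \<alpha> * y' i) (\<lambda>i. (- \<beta>) * x' i + \<alpha> * y' i)
        = ip m (\<lambda>i. (- \<beta>) * x i + \<alpha> * y i) (\<lambda>i. (- \<beta>) * x i + \<alpha> * y i)"
      unfolding ip_lincomb_orthogonal[OF orth(1)] ip_lincomb_orthogonal[OF orth(2)] bal ..
    show "ip m h (\<lambda>i. (- \<beta>) * x i + \<alpha> * y i) = 0" if "ip m h x = 0" "ip m h y = 0" for h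
      unfolding ip_lincomb_right using that by simp
    show "ip n h (\<lambda>i. (- \<beta>) * x' i + \<alpha> * y' i) = 0" if "ip n h x' = 0" "ip n h y' = 0" for h
      unfolding ip_lincomb_right using that by simp
    fix i i'
    have "(\<alpha> * x i + \<beta> * y i) * (\<alpha> * x' i' + \<beta> * y' i') + ((- \<beta>) * x i + \<alpha> * y i) * ((- \<beta>) * x' i' + \<alpha> * y' i')
        = (\<alpha>\<^sup>2 + \<beta>\<^sup>2) * (x i * x' i' + y i * y' i')"
      by (simp add: algebra_simps power2_eq_square)
    thus "(\<alpha> * x i + \<beta> * y i) * (\<alpha> * x' i' + \<beta> * y' i') + ((- \<beta>) * x i + \<alpha> * y i) * ((- \<beta>) * x' i' + \<alpha> * y' i')
        = x i * x' i' + y i * y' i'"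
      unfolding unit by simp
  qed
qed

lemma balance_step:
  fixes a c :: "nat \<Rightarrow> nat \<Rightarrow> real"
  assumes fin: "finite I" and p: "p \<in> I" and q: "q \<in> I"
    and orth: "\<forall>j\<in>I. \<forall>j'\<in>I. j \<noteq> j' \<longrightarrow> ip m (a j) (a j') = 0 \<and> ip n (c j) (c j') = 0"
    and bal: "\<forall>j\<in>I. ip n (c j) (c j) = ip m (a j) (a j)"
    and above: "\<mu> < ip m (a p) (a p)" and below: "ip m (a q) (a q) < \<mu>"
  shows "\<exists>u v a' c'. ip m u u = \<mu> \<and> ip n v v = \<mu> \<and>
    (\<forall>j\<in>I - {p}. \<forall>j'\<in>I - {p}. j \<noteq> j' \<longrightarrow> ip m (a' j) (a' j') = 0 \<and> ip n (c' j) (c' j') = 0) \<and>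
    (\<forall>j\<in>I - {p}. ip n (c' j) (c' j) = ip m (a' j) (a' j)) \<and>
    (\<Sum>j\<in>I - {p}. ip m (a' j) (a' j)) = (\<Sum>j\<in>I. ip m (a j) (a j)) - \<mu> \<and>
    (\<forall>i i'. u i * v i' + (\<Sum>j\<in>I - {p}. a' j i * c' j i') = (\<Sum>j\<in>I. a j i * c j i'))"
proof -
  have pq: "p \<noteq> q" using above below by auto
  have opq: "ip m (a p) (a q) = 0" "ip n (c p) (c q) = 0" using orth p q pq by auto
  obtain u v z z' where uv: "ip m u u = \<mu>" "ip n v v = \<mu>"
    and z: "ip m z z = ip m (a p) (a p) + ip m (a q) (a q) - \<mu>" "ip n z' z' = ip m z z"
    and z_orth: "\<And>h. ip m h (a p) = 0 \<Longrightarrow> ip m h (a q) = 0 \<Longrightarrow> ip m h z = 0"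
      "\<And>h. ip n h (c p) = 0 \<Longrightarrow> ip n h (c q) = 0 \<Longrightarrow> ip n h z' = 0"
    and outer: "\<And>i i'. u i * v i' + z i * z' i' = a p i * c p i' + a q i * c q i'"
    using rotate_orthogonal_pair[OF opq bal[rule_format, OF p] bal[rule_format, OF q] below above] by blast
  \<comment> \<open>The pair \<open>(u, v)\<close> is split off; the rotated complement \<open>(z, z')\<close> takes the place of \<open>q\<close>.\<close>
  define a' where "a' = a(q := z)"
  define c' where "c' = c(q := z')"
  have "ip m (a' j) (a' j') = 0 \<and> ip n (c' j) (c' j') = 0"
    if j: "j \<in> I - {p}" "j' \<in> I - {p}" "j \<noteq> j'" for j j'
  proof -
    have rotated: "ip m (a i) z = 0 \<and> ip n (c i) z' = 0" if "i \<in> I - {p}" "i \<noteq> q" for i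
      using z_orth orth that p q by auto
    consider "j = q" | "j' = q" | "j \<noteq> q" "j' \<noteq> q" by blast
    thus ?thesis
    proof cases
      case 1
      thus ?thesis using rotated[of j'] j ip_commute[of m z] ip_commute[of n z'] unfolding a'_def c'_def by auto
    next
      case 2
      thus ?thesis using rotated[of j] j unfolding a'_def c'_def by auto
    next
      case 3
      thus ?thesis using orth j unfolding a'_def c'_def by auto
    qed
  qed
  moreover have "\<forall>j\<in>I - {p}. ip n (c' j) (c' j) = ip m (a' j) (a' j)"
    using z bal unfolding a'_def c'_def by auto
  moreover have "(\<Sum>j\<in>I - {p}. ip m (a' j) (a' j)) = (\<Sum>j\<in>I. ip m (a j) (a j)) - \<mu>"
  proof -
    have "(\<Sum>j\<in>I - {p} - {q}. ip m (a' j) (a' j)) = (\<Sum>j\<in>I - {p} - {q}. ip m (a j) (a j))"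
      unfolding a'_def by (intro sum.cong) auto
    thus ?thesis
      using fin p q pq z by (simp add: sum.remove[of I p] sum.remove[of "I - {p}" q] a'_def)
  qed
  moreover have "u i * v i' + (\<Sum>j\<in>I - {p}. a' j i * c' j i') = (\<Sum>j\<in>I. a j i * c j i')" for i i'
  proof -
    have "(\<Sum>j\<in>I - {p} - {q}. a' j i * c' j i') = (\<Sum>j\<in>I - {p} - {q}. a j i * c j i')"
      unfolding a'_def c'_def by (intro sum.cong) auto
    thus ?thesis
      using fin p q pq outer[of i i'] by (simp add: sum.remove[of I p] sum.remove[of "I - {p}" q] a'_def c'_def)
  qed
  ultimately show ?thesis using uv by blast
qed

lemma exists_above_below_mean:
  fixes w :: "'a \<Rightarrow> real"
  assumes "finite I" and mean: "(\<Sum>j\<in>I. w j) = real (card I) * \<mu>" and j: "j \<in> I" "w j \<noteq> \<mu>"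
  shows "\<exists>p\<in>I. \<mu> < w p" "\<exists>q\<in>I. w q < \<mu>"
proof -
  show "\<exists>p\<in>I. \<mu> < w p"
  proof (rule ccontr)
    assume "\<not> ?thesis"
    hence le: "\<forall>i\<in>I. w i \<le> \<mu>" by (auto simp: not_less)
    with j have "w j < \<mu>" by (metis order_le_neq_trans)
    with le j have "(\<Sum>j\<in>I. w j) < (\<Sum>j\<in>I. \<mu>)" by (intro sum_strict_mono_ex1[OF assms(1)]) auto
    thus False using mean by simp
  qed
  show "\<exists>q\<in>I. w q < \<mu>"
  proof (rule ccontr)
    assume "\<not> ?thesis"
    hence ge: "\<forall>i\<in>I. \<mu> \<le> w i" by (auto simp: not_less)
    with j have "\<mu> < w j" by (metis order_le_neq_trans)
    with ge j have "(\<Sum>j\<in>I. \<mu>) < (\<Sum>j\<in>I. w j)" by (intro sum_strict_mono_ex1[OF assms(1)]) auto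
    thus False using mean by simp
  qed
qed

lemma balance_rank_one_sum:
  fixes a c :: "nat \<Rightarrow> nat \<Rightarrow> real"
  assumes "finite I"
    and "\<forall>j\<in>I. \<forall>j'\<in>I. j \<noteq> j' \<longrightarrow> ip m (a j) (a j') = 0 \<and> ip n (c j) (c j') = 0"
    and "\<forall>j\<in>I. ip n (c j) (c j) = ip m (a j) (a j)"
    and "(\<Sum>j\<in>I. ip m (a j) (a j)) = real (card I) * \<mu>"
  shows "\<exists>a' c'. (\<forall>j\<in>I. ip m (a' j) (a' j) = \<mu> \<and> ip n (c' j) (c' j) = \<mu>) \<and>
           (\<forall>i i'. (\<Sum>j\<in>I. a' j i * c' j i') = (\<Sum>j\<in>I. a j i * c j i'))"
  using assms
proof (induction I arbitrary: a c rule: finite_remove_induct)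
  case empty
  thus ?case by simp
next
  case (remove I)
  note orth = remove.prems(1) and bal = remove.prems(2) and mean = remove.prems(3)
  show ?case
  proof (cases "\<forall>j\<in>I. ip m (a j) (a j) = \<mu>")
    case True
    thus ?thesis using bal by metis
  next
    case False
    then obtain j where "j \<in> I" "ip m (a j) (a j) \<noteq> \<mu>" by blast
    then obtain p q where p: "p \<in> I" "\<mu> < ip m (a p) (a p)" and q: "q \<in> I" "ip m (a q) (a q) < \<mu>"
      using exists_above_below_mean[of I "\<lambda>j. ip m (a j) (a j)"] remove.hyps(1) mean by blast
    obtain u v a2 c2 where uv: "ip m u u = \<mu>" "ip n v v = \<mu>"
      and orth2: "\<forall>j\<in>I - {p}. \<forall>j'\<in>I - {p}. j \<noteq> j' \<longrightarrow> ip m (a2 j) (a2 j') = 0 \<and> ip n (c2 j) (c2 j') = 0"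
      and bal2: "\<forall>j\<in>I - {p}. ip n (c2 j) (c2 j) = ip m (a2 j) (a2 j)"
      and sum2: "(\<Sum>j\<in>I - {p}. ip m (a2 j) (a2 j)) = (\<Sum>j\<in>I. ip m (a j) (a j)) - \<mu>"
      and outer2: "\<forall>i i'. u i * v i' + (\<Sum>j\<in>I - {p}. a2 j i * c2 j i') = (\<Sum>j\<in>I. a j i * c j i')"
      using balance_step[OF remove.hyps(1) p(1) q(1) orth bal p(2) q(2)] by blast
    have "(\<Sum>j\<in>I - {p}. ip m (a2 j) (a2 j)) = real (card (I - {p})) * \<mu>"
    proof -
      have "card I \<ge> 1" using p(1) remove.hyps(1) by (auto simp: Suc_le_eq card_gt_0_iff)
      thus ?thesis using sum2 mean p(1) by (simp add: of_nat_diff algebra_simps)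
    qed
    then obtain a3 c3 where norms3: "\<forall>j\<in>I - {p}. ip m (a3 j) (a3 j) = \<mu> \<and> ip n (c3 j) (c3 j) = \<mu>"
      and outer3: "\<forall>i i'. (\<Sum>j\<in>I - {p}. a3 j i * c3 j i') = (\<Sum>j\<in>I - {p}. a2 j i * c2 j i')"
      using remove.IH[OF p(1) orth2 bal2] by blast
    show ?thesis
    proof (intro exI conjI allI)
      show "\<forall>j\<in>I. ip m ((a3(p := u)) j) ((a3(p := u)) j) = \<mu> \<and> ip n ((c3(p := v)) j) ((c3(p := v)) j) = \<mu>"
        using norms3 uv by auto
      fix i i'
      have "(\<Sum>j\<in>I. (a3(p := u)) j i * (c3(p := v)) j i')
          = u i * v i' + (\<Sum>j\<in>I - {p}. (a3(p := u)) j i * (c3(p := v)) j i')"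
        using remove.hyps(1) p(1) by (subst sum.remove) auto
      also have "(\<Sum>j\<in>I - {p}. (a3(p := u)) j i * (c3(p := v)) j i') = (\<Sum>j\<in>I - {p}. a3 j i * c3 j i')"
        by (intro sum.cong) auto
      finally show "(\<Sum>j\<in>I. (a3(p := u)) j i * (c3(p := v)) j i') = (\<Sum>j\<in>I. a j i * c j i')"
        using outer2 outer3 by simp
    qed
  qed
qed

section \<open>The dropout objective\<close>

lemma sum_Pow_square_sum:
  fixes t :: "nat \<Rightarrow> real"
  assumes "finite K"
  shows "(\<Sum>S\<in>Pow K. ((\<Sum>l\<in>S. t l) + c)\<^sup>2)
       = 2 ^ card K * (c\<^sup>2 + c * (\<Sum>l\<in>K. t l) + ((\<Sum>l\<in>K. t l)\<^sup>2 + (\<Sum>l\<in>K. (t l)\<^sup>2)) / 4)"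
  using assms
proof (induction K arbitrary: c rule: finite_induct)
  case empty
  thus ?case by simp
next
  case (insert x F c)
  have disj: "Pow F \<inter> insert x ` Pow F = {}" using insert.hyps by auto
  have inj: "inj_on (insert x) (Pow F)" using insert.hyps unfolding inj_on_def by (metis PowD insert_ident subsetD)
  have "(\<Sum>S\<in>Pow (insert x F). ((\<Sum>l\<in>S. t l) + c)\<^sup>2)
      = (\<Sum>S\<in>Pow F. ((\<Sum>l\<in>S. t l) + c)\<^sup>2) + (\<Sum>S\<in>insert x ` Pow F. ((\<Sum>l\<in>S. t l) + c)\<^sup>2)"
    unfolding Pow_insert using insert.hyps disj by (subst sum.union_disjoint) auto
  also have "(\<Sum>S\<in>insert x ` Pow F. ((\<Sum>l\<in>S. t l) + c)\<^sup>2) = (\<Sum>S\<in>Pow F. ((\<Sum>l\<in>S. t l) + (c + t x))\<^sup>2)"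
  proof (subst sum.reindex[OF inj], unfold comp_def, rule sum.cong[OF refl])
    fix S assume "S \<in> Pow F"
    hence "finite S" "x \<notin> S" using insert.hyps finite_subset by auto
    thus "((\<Sum>l\<in>insert x S. t l) + c)\<^sup>2 = ((\<Sum>l\<in>S. t l) + (c + t x))\<^sup>2" by (simp add: algebra_simps)
  qed
  finally show ?case unfolding insert.IH using insert.hyps
    by (simp add: power2_eq_square algebra_simps add_divide_distrib)
qed

lemma Pi_sel_carrier [simp]: "Pi_sel k S \<in> carrier_mat k k"
  and Pi_sel_dims [simp]: "dim_row (Pi_sel k S) = k" "dim_col (Pi_sel k S) = k"
  unfolding Pi_sel_def by simp_all

lemma mult_Pi_sel_transpose_index:
  fixes U V :: "real mat"
  assumes U: "U \<in> carrier_mat m k" and V: "V \<in> carrier_mat n k" and S: "S \<subseteq> {..<k}"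
    and i: "i < m" and j: "j < n"
  shows "(U * Pi_sel k S * transpose_mat V) $$ (i,j) = (\<Sum>l\<in>S. U $$ (i,l) * V $$ (j,l))"
proof -
  have "(U * Pi_sel k S) $$ (i,l) = (if l \<in> S then U $$ (i,l) else 0)" if l: "l < k" for l
  proof -
    have "(U * Pi_sel k S) $$ (i,l) = (\<Sum>t<k. U $$ (i,t) * Pi_sel k S $$ (t,l))"
      using U i l by (simp add: scalar_prod_def atLeast0LessThan del: Pi_sel_carrier)
    also have "\<dots> = (\<Sum>t<k. if t = l then (if l \<in> S then U $$ (i,l) else 0) else 0)"
      using l by (intro sum.cong) (auto simp: Pi_sel_def)
    finally show ?thesis using l by simp
  qed
  moreover have "U * Pi_sel k S \<in> carrier_mat m k" using U by simp
  hence "(U * Pi_sel k S * transpose_mat V) $$ (i,j) = (\<Sum>l<k. (U * Pi_sel k S) $$ (i,l) * V $$ (j,l))"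
    using mult_transpose_index[OF _ V i j] by blast
  ultimately have "(U * Pi_sel k S * transpose_mat V) $$ (i,j) = (\<Sum>l<k. if l \<in> S then U $$ (i,l) * V $$ (j,l) else 0)"
    by (auto intro: sum.cong)
  also have "\<dots> = (\<Sum>l\<in>S. U $$ (i,l) * V $$ (j,l))"
    using S by (simp add: sum.If_cases Int_absorb1)
  finally show ?thesis .
qed

definition dropout_fit :: "nat \<Rightarrow> real mat \<Rightarrow> real mat \<Rightarrow> real" where
  "dropout_fit k M X =
     (\<Sum>i<dim_row M. \<Sum>j<dim_col M. 2 ^ k * (M $$ (i,j) - X $$ (i,j) / 2)\<^sup>2 - (M $$ (i,j))\<^sup>2) / (2 ^ k - 1)"

definition dropout_reg :: "nat \<Rightarrow> real mat \<Rightarrow> real mat \<Rightarrow> real" where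
  "dropout_reg k U V =
     (\<Sum>l<k. ip (dim_row U) (col_fun U l) (col_fun U l) * ip (dim_row V) (col_fun V l) (col_fun V l))"

lemma dropout_loss_decomposition:
  fixes U V M :: "real mat"
  assumes U: "U \<in> carrier_mat m k" and V: "V \<in> carrier_mat n k" and M: "M \<in> carrier_mat m n"
  shows "dropout_loss k M U V
           = dropout_fit k M (U * transpose_mat V) + 2 ^ k / (4 * (2 ^ k - 1)) * dropout_reg k U V"
proof -
  define t where "t i j l = U $$ (i,l) * V $$ (j,l)" for i j l
  define F where "F S = frob_sq (U * Pi_sel k S * transpose_mat V - M)" for S
  have F: "F S = (\<Sum>i<m. \<Sum>j<n. ((\<Sum>l\<in>S. t i j l) + - M $$ (i,j))\<^sup>2)" if "S \<subseteq> {..<k}" for S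
    unfolding F_def frob_sq_def t_def using U V M that
    by (intro sum.cong) (auto simp del: index_mult_mat simp: mult_Pi_sel_transpose_index)
  have X: "(U * transpose_mat V) $$ (i,j) = (\<Sum>l<k. t i j l)" if "i < m" "j < n" for i j
    unfolding t_def using mult_transpose_index[OF U V that] .
  have "(\<Sum>S\<in>Pow {..<k}. F S) = (\<Sum>S\<in>Pow {..<k}. \<Sum>i<m. \<Sum>j<n. ((\<Sum>l\<in>S. t i j l) + - M $$ (i,j))\<^sup>2)"
    by (intro sum.cong refl) (simp add: F)
  also have "\<dots> = (\<Sum>i<m. \<Sum>j<n. \<Sum>S\<in>Pow {..<k}. ((\<Sum>l\<in>S. t i j l) + - M $$ (i,j))\<^sup>2)"
    by (subst sum.swap) (intro sum.cong refl sum.swap)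
  also have "\<dots> = (\<Sum>i<m. \<Sum>j<n. 2 ^ k * ((- M $$ (i,j))\<^sup>2 + - M $$ (i,j) * (\<Sum>l<k. t i j l)
          + ((\<Sum>l<k. t i j l)\<^sup>2 + (\<Sum>l<k. (t i j l)\<^sup>2)) / 4))"
    by (simp only: sum_Pow_square_sum[OF finite_lessThan] card_lessThan)
  finally have sum_F: "(\<Sum>S\<in>Pow {..<k}. F S) = \<dots>" .
  have pointwise: "2 ^ k * ((- a)\<^sup>2 + - a * x + (x\<^sup>2 + r) / 4) - a\<^sup>2
      = (2 ^ k * (a - x / 2)\<^sup>2 - a\<^sup>2) + 2 ^ k / 4 * r" for a x r :: real
    by (simp add: field_simps power2_eq_square)
  have "(\<Sum>S\<in>Pow {..<k}. F S) - F {}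
      = (\<Sum>i<m. \<Sum>j<n. 2 ^ k * ((- M $$ (i,j))\<^sup>2 + - M $$ (i,j) * (\<Sum>l<k. t i j l)
          + ((\<Sum>l<k. t i j l)\<^sup>2 + (\<Sum>l<k. (t i j l)\<^sup>2)) / 4) - (M $$ (i,j))\<^sup>2)"
    unfolding sum_F F[OF empty_subsetI] by (simp add: sum_subtractf)
  also have "\<dots> = (\<Sum>i<m. \<Sum>j<n. (2 ^ k * (M $$ (i,j) - (U * transpose_mat V) $$ (i,j) / 2)\<^sup>2 - (M $$ (i,j))\<^sup>2)
           + 2 ^ k / 4 * (\<Sum>l<k. (t i j l)\<^sup>2))"
    by (intro sum.cong refl) (simp only: pointwise X lessThan_iff)
  also have "\<dots> = (\<Sum>i<m. \<Sum>j<n. 2 ^ k * (M $$ (i,j) - (U * transpose_mat V) $$ (i,j) / 2)\<^sup>2 - (M $$ (i,j))\<^sup>2)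
        + 2 ^ k / 4 * (\<Sum>i<m. \<Sum>j<n. \<Sum>l<k. (t i j l)\<^sup>2)"
    by (simp add: sum.distrib sum_distrib_left)
  finally have "(\<Sum>S\<in>Pow {..<k}. F S) - F {} = \<dots>" .
  moreover have "(\<Sum>i<m. \<Sum>j<n. \<Sum>l<k. (t i j l)\<^sup>2) = dropout_reg k U V"
  proof -
    have "(\<Sum>i<m. \<Sum>j<n. \<Sum>l<k. (t i j l)\<^sup>2) = (\<Sum>l<k. \<Sum>i<m. \<Sum>j<n. (t i j l)\<^sup>2)"
      by (subst sum.swap) (intro sum.cong refl sum.swap)
    thus ?thesis
      unfolding dropout_reg_def t_def ip_def using U V
      by (simp add: sum_product power2_eq_square mult_ac)
  qed
  moreover have "dropout_loss k M U V = ((\<Sum>S\<in>Pow {..<k}. F S) - F {}) / (2 ^ k - 1)"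
    unfolding dropout_loss_def F_def atLeast0LessThan by (subst sum_diff1) auto
  ultimately show ?thesis
    unfolding dropout_fit_def using M by (simp add: add_divide_distrib)
qed

section \<open>Minimizers of the dropout objective\<close>

lemma balanced_rank_one_decomposition:
  fixes X :: "real mat"
  assumes X: "X \<in> carrier_mat m n" and svd: "compact_svd X J s e f"
    and card: "card J \<le> k" and k: "0 < k"
  defines "\<mu> \<equiv> (\<Sum>j\<in>J. s j) / real k"
  shows "\<exists>a c. (\<forall>l<k. ip m (a l) (a l) = \<mu> \<and> ip n (c l) (c l) = \<mu>) \<and>
           (\<forall>i<m. \<forall>i'<n. X $$ (i,i') = (\<Sum>l<k. a l i * c l i'))"
proof -
  have fin: "finite J" and orth_e: "orthonormal_on m J e" and orth_f: "orthonormal_on n J f"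
    and s_pos: "\<forall>j\<in>J. 0 < s j" and X_svd: "\<forall>i<m. \<forall>i'<n. X $$ (i,i') = (\<Sum>j\<in>J. s j * e j i * f j i')"
    using svd X unfolding compact_svd_def by auto
  \<comment> \<open>Pad the singular triples with \<open>k - |J|\<close> zero terms, indexed by fresh indices \<open>E\<close>.\<close>
  obtain E where E: "finite E" "card E = k - card J" "J \<inter> E = {}"
    using finite_arbitrarily_large_disj[OF infinite_UNIV_nat fin] by blast
  define I where "I = J \<union> E"
  have I: "finite I" "card I = k" unfolding I_def using E fin card by (simp_all add: card_Un_disjoint)
  define a where "a j = (if j \<in> J then (\<lambda>i. sqrt (s j) * e j i) else (\<lambda>_. 0))" for j
  define c where "c j = (if j \<in> J then (\<lambda>i. sqrt (s j) * f j i) else (\<lambda>_. 0))" for j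
  have norm_a: "ip m (a j) (a j) = (if j \<in> J then s j else 0)" and norm_c: "ip n (c j) (c j) = ip m (a j) (a j)" for j
    using orth_e orth_f s_pos unfolding a_def c_def orthonormal_on_def
    by (auto simp: ip_scale less_imp_le)
  have "\<forall>j\<in>I. \<forall>j'\<in>I. j \<noteq> j' \<longrightarrow> ip m (a j) (a j') = 0 \<and> ip n (c j) (c j') = 0"
    using orth_e orth_f unfolding a_def c_def orthonormal_on_def by (auto simp: ip_scale)
  moreover have "(\<Sum>j\<in>I. ip m (a j) (a j)) = real (card I) * \<mu>"
    unfolding norm_a I(2) \<mu>_def using k I(1) by (simp add: sum.If_cases I_def Int_absorb1)
  ultimately obtain a' c' where norms: "\<forall>j\<in>I. ip m (a' j) (a' j) = \<mu> \<and> ip n (c' j) (c' j) = \<mu>"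
    and outer: "\<forall>i i'. (\<Sum>j\<in>I. a' j i * c' j i') = (\<Sum>j\<in>I. a j i * c j i')"
    using balance_rank_one_sum[OF I(1)] norm_c by blast
  obtain h where h: "bij_betw h {0..<k} I" using ex_bij_betw_nat_finite[OF I(1)] I(2) by auto
  have "X $$ (i,i') = (\<Sum>l<k. a' (h l) i * c' (h l) i')" if "i < m" "i' < n" for i i'
  proof -
    have "(\<Sum>l<k. a' (h l) i * c' (h l) i') = (\<Sum>j\<in>I. a j i * c j i')"
      using sum.reindex_bij_betw[OF h, of "\<lambda>j. a' j i * c' j i'"] outer by (simp add: atLeast0LessThan)
    also have "\<dots> = (\<Sum>j\<in>J. a j i * c j i')"
      unfolding I_def using fin E by (intro sum.mono_neutral_right) (auto simp: a_def)
    also have "\<dots> = (\<Sum>j\<in>J. s j * e j i * f j i')"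
    proof (rule sum.cong[OF refl])
      fix j assume j: "j \<in> J"
      hence "a j i * c j i' = (sqrt (s j) * sqrt (s j)) * e j i * f j i'" by (simp add: a_def c_def mult_ac)
      thus "a j i * c j i' = s j * e j i * f j i'" using s_pos j by (simp add: less_imp_le)
    qed
    finally show ?thesis using X_svd that by simp
  qed
  moreover have "\<forall>l<k. ip m (a' (h l)) (a' (h l)) = \<mu> \<and> ip n (c' (h l)) (c' (h l)) = \<mu>"
    using norms h by (auto simp: bij_betw_def)
  ultimately show ?thesis by (intro exI[of _ "a' \<circ> h"] exI[of _ "c' \<circ> h"]) simp
qed

lemma balanced_factorization_exists:
  fixes X :: "real mat"
  assumes X: "X \<in> carrier_mat m n" and svd: "compact_svd X J s e f"
    and card: "card J \<le> k" and k: "0 < k"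
  shows "\<exists>U V. U \<in> carrier_mat m k \<and> V \<in> carrier_mat n k \<and> U * transpose_mat V = X \<and>
           dropout_reg k U V = real k * ((\<Sum>j\<in>J. s j) / real k)\<^sup>2"
proof -
  obtain a c where norms: "\<forall>l<k. ip m (a l) (a l) = (\<Sum>j\<in>J. s j) / k \<and> ip n (c l) (c l) = (\<Sum>j\<in>J. s j) / k"
    and X_eq: "\<forall>i<m. \<forall>i'<n. X $$ (i,i') = (\<Sum>l<k. a l i * c l i')"
    using balanced_rank_one_decomposition[OF X svd card k] by blast
  define U where "U = mat m k (\<lambda>(i,l). a l i)"
  define V where "V = mat n k (\<lambda>(i,l). c l i)"
  have U: "U \<in> carrier_mat m k" and V: "V \<in> carrier_mat n k" unfolding U_def V_def by auto
  have "U * transpose_mat V = X"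
    using X X_eq mult_transpose_index[OF U V] by (intro eq_matI) (auto simp: U_def V_def)
  moreover have "dropout_reg k U V = real k * ((\<Sum>j\<in>J. s j) / real k)\<^sup>2"
  proof -
    have "dropout_reg k U V = (\<Sum>l<k. ip m (col_fun U l) (col_fun U l) * ip n (col_fun V l) (col_fun V l))"
      unfolding dropout_reg_def using U V by simp
    also have "\<dots> = (\<Sum>l<k. ip m (a l) (a l) * ip n (c l) (c l))"
      by (intro sum.cong refl arg_cong2[where f = "(*)"] ip_cong) (auto simp: U_def V_def)
    finally show ?thesis using norms by (simp add: power2_eq_square)
  qed
  ultimately show ?thesis using U V by blast
qed

lemma dropout_minimizer_reg_le:
  fixes U V M :: "real mat"
  assumes k: "0 < k" "min m n \<le> k"
    and U: "U \<in> carrier_mat m k" and V: "V \<in> carrier_mat n k" and M: "M \<in> carrier_mat m n"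
    and min: "\<And>U' V'. U' \<in> carrier_mat m k \<Longrightarrow> V' \<in> carrier_mat n k \<Longrightarrow>
           dropout_loss k M U V \<le> dropout_loss k M U' V'"
  shows "dropout_reg k U V \<le> real k * (nuclear_norm (U * transpose_mat V) / real k)\<^sup>2"
proof -
  have X: "U * transpose_mat V \<in> carrier_mat m n" using U V by simp
  obtain J s e f where svd: "compact_svd (U * transpose_mat V) J s e f" and card: "card J \<le> min m n"
    and nuc: "nuclear_norm (U * transpose_mat V) = (\<Sum>j\<in>J. s j)"
    using compact_svd_exists[OF X] by blast
  obtain U' V' where U': "U' \<in> carrier_mat m k" and V': "V' \<in> carrier_mat n k"
    and same: "U' * transpose_mat V' = U * transpose_mat V"
    and reg': "dropout_reg k U' V' = real k * (nuclear_norm (U * transpose_mat V) / real k)\<^sup>2"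
    using balanced_factorization_exists[OF X svd _ k(1)] card k(2) nuc by fastforce
  define c :: real where "c = 2 ^ k / (4 * (2 ^ k - 1))"
  have "0 < c" unfolding c_def using k(1) by (simp add: field_simps)
  moreover have "dropout_fit k M (U * transpose_mat V) + c * dropout_reg k U V
      \<le> dropout_fit k M (U * transpose_mat V) + c * dropout_reg k U' V'"
    using min[OF U' V'] unfolding dropout_loss_decomposition[OF U V M] dropout_loss_decomposition[OF U' V' M]
      same c_def .
  ultimately show ?thesis unfolding reg'[symmetric] by simp
qed

lemma eq_mean_of_sum_le_sum_square:
  fixes a b :: "nat \<Rightarrow> real"
  assumes le: "\<forall>l<k. a l \<le> b l" and sum_a: "(\<Sum>l<k. a l) = real k * \<mu>"
    and sum_b2: "(\<Sum>l<k. (b l)\<^sup>2) \<le> real k * \<mu>\<^sup>2" and "0 \<le> \<mu>"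
  shows "\<forall>l<k. a l = \<mu> \<and> b l = \<mu>"
proof -
  have "real k * \<mu> \<le> (\<Sum>l<k. b l)" unfolding sum_a[symmetric] using le by (intro sum_mono) simp
  hence "\<mu> * (real k * \<mu>) \<le> \<mu> * (\<Sum>l<k. b l)" using \<open>0 \<le> \<mu>\<close> by (rule mult_left_mono)
  moreover have "(\<Sum>l<k. (b l - \<mu>)\<^sup>2) = (\<Sum>l<k. (b l)\<^sup>2) - 2 * \<mu> * (\<Sum>l<k. b l) + real k * \<mu>\<^sup>2"
    by (simp add: power2_eq_square algebra_simps sum.distrib sum_subtractf sum_distrib_left)
  ultimately have "(\<Sum>l<k. (b l - \<mu>)\<^sup>2) \<le> 0"
    using sum_b2 by (simp add: power2_eq_square algebra_simps)
  hence "(\<Sum>l<k. (b l - \<mu>)\<^sup>2) = 0" by (intro order_antisym) (simp_all add: sum_nonneg)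
  hence "\<forall>l<k. (b l - \<mu>)\<^sup>2 = 0" using sum_nonneg_eq_0_iff[of "{..<k}" "\<lambda>l. (b l - \<mu>)\<^sup>2"] by simp
  hence b: "\<forall>l<k. b l = \<mu>" by simp
  hence "(\<Sum>l<k. b l - a l) = 0" using sum_a by (simp add: sum_subtractf)
  hence "\<forall>l<k. b l - a l = 0" using le by (subst (asm) sum_nonneg_eq_0_iff) auto
  with b show ?thesis by simp
qed

lemma dropout_minimizer_balanced:
  fixes U V M :: "real mat"
  assumes k: "0 < k" "min m n \<le> k"
    and U: "U \<in> carrier_mat m k" and V: "V \<in> carrier_mat n k" and M: "M \<in> carrier_mat m n"
    and min: "\<And>U' V'. U' \<in> carrier_mat m k \<Longrightarrow> V' \<in> carrier_mat n k \<Longrightarrow>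
           dropout_loss k M U V \<le> dropout_loss k M U' V'"
  shows "\<exists>J s e f. compact_svd (U * transpose_mat V) J s e f \<and> card J \<le> k \<and>
     (\<forall>l<k. sqrt (ip m (col_fun U l) (col_fun U l)) * sqrt (ip n (col_fun V l) (col_fun V l))
              = nuclear_norm (U * transpose_mat V) / real k \<and>
            (\<Sum>j\<in>J. ip m (e j) (col_fun U l) * ip n (f j) (col_fun V l))
              = nuclear_norm (U * transpose_mat V) / real k)"
proof -
  define X where "X = U * transpose_mat V"
  have X: "X \<in> carrier_mat m n" unfolding X_def using U V by simp
  obtain J s e f where svd: "compact_svd X J s e f" and card: "card J \<le> min m n"
    and nuc: "nuclear_norm X = (\<Sum>j\<in>J. s j)"
    using compact_svd_exists[OF X] by blast
  have fin: "finite J" and orth_e: "orthonormal_on m J e" and orth_f: "orthonormal_on n J f"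
    using svd X unfolding compact_svd_def by auto
  define \<mu> where "\<mu> = nuclear_norm X / real k"
  define a where "a l = (\<Sum>j\<in>J. ip m (e j) (col_fun U l) * ip n (f j) (col_fun V l))" for l
  define b where "b l = sqrt (ip m (col_fun U l) (col_fun U l)) * sqrt (ip n (col_fun V l) (col_fun V l))" for l
  have "\<forall>l<k. a l \<le> b l" unfolding a_def b_def using Bessel_bilinear_le[OF fin orth_e orth_f] by blast
  moreover have "(\<Sum>l<k. a l) = real k * \<mu>"
  proof -
    have "(\<Sum>l<k. a l) = (\<Sum>j\<in>J. \<Sum>l<k. 1 * (ip m (e j) (col_fun U l) * ip n (f j) (col_fun V l)))"
      unfolding a_def by (simp add: sum.swap[of _ "{..<k}"])
    also have "\<dots> = (\<Sum>j\<in>J. bilin m n (e j) (\<lambda>i i'. \<Sum>l<k. 1 * U $$ (i,l) * V $$ (i',l)) (f j))"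
      by (simp only: bilin_sum_outer)
    also have "\<dots> = (\<Sum>j\<in>J. bilin m n (e j) (\<lambda>i i'. X $$ (i,i')) (f j))"
      unfolding X_def using U V
      by (intro sum.cong refl bilin_cong) (simp del: index_mult_mat add: mult_transpose_index[OF U V])
    also have "\<dots> = nuclear_norm X" using compact_svd_sum_bilin[OF svd] X nuc by simp
    finally show ?thesis unfolding \<mu>_def using k(1) by simp
  qed
  moreover have "(\<Sum>l<k. (b l)\<^sup>2) \<le> real k * \<mu>\<^sup>2"
    using dropout_minimizer_reg_le[OF k U V M min] U V
    unfolding b_def \<mu>_def X_def dropout_reg_def by (simp add: power_mult_distrib ip_self_nonneg)
  moreover have "0 \<le> \<mu>" unfolding \<mu>_def nuc using svd unfolding compact_svd_def
    by (simp add: sum_nonneg less_imp_le)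
  ultimately have "\<forall>l<k. a l = \<mu> \<and> b l = \<mu>" by (rule eq_mean_of_sum_le_sum_square)
  with svd card k(2) show ?thesis unfolding a_def b_def \<mu>_def X_def by (intro exI[of _ J] exI[of _ s] exI[of _ e] exI[of _ f]) auto
qed

lemma frob_sq_selection_residual:
  fixes U V P Q :: "real mat"
  assumes U: "U \<in> carrier_mat m k" and V: "V \<in> carrier_mat n k"
    and P: "P \<in> carrier_mat m k'" and Q: "Q \<in> carrier_mat n k'" and S: "S \<subseteq> {..<k}"
  shows "frob_sq (U * Pi_sel k S * transpose_mat V - trunc_approx P Q \<sigma> r)
    = (\<Sum>i<m. \<Sum>i'<n. ((\<Sum>l\<in>S. U $$ (i,l) * V $$ (i',l)) - (\<Sum>t<r. \<sigma> t * P $$ (i,t) * Q $$ (i',t)))\<^sup>2)"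
  unfolding frob_sq_def using U V P Q
  by (intro sum.cong) (auto simp del: index_mult_mat simp: mult_Pi_sel_transpose_index[OF U V S] trunc_approx_def)

lemma sum_bilin_selection_residual:
  "(\<Sum>j\<in>K. bilin m n (x j)
      (\<lambda>i i'. (\<Sum>l\<in>S. U $$ (i,l) * V $$ (i',l)) - (\<Sum>t<r. \<sigma> t * P $$ (i,t) * Q $$ (i',t))) (y j))
   = (\<Sum>l\<in>S. \<Sum>j\<in>K. ip m (x j) (col_fun U l) * ip n (y j) (col_fun V l))
     - (\<Sum>t<r. \<sigma> t * (\<Sum>j\<in>K. ip m (x j) (col_fun P t) * ip n (y j) (col_fun Q t)))"
proof -
  have "bilin m n (x j) (\<lambda>i i'. \<Sum>l\<in>S. U $$ (i,l) * V $$ (i',l)) (y j)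
      = (\<Sum>l\<in>S. ip m (x j) (col_fun U l) * ip n (y j) (col_fun V l))" for j
    using bilin_sum_outer[of m n "x j" "\<lambda>_. 1" "col_fun U" "col_fun V" S "y j"] by simp
  moreover have "bilin m n (x j) (\<lambda>i i'. \<Sum>t<r. \<sigma> t * P $$ (i,t) * Q $$ (i',t)) (y j)
      = (\<Sum>t<r. \<sigma> t * (ip m (x j) (col_fun P t) * ip n (y j) (col_fun Q t)))" for j
    by (rule bilin_sum_outer)
  ultimately show ?thesis
    by (simp add: bilin_diff sum_subtractf sum.swap[of _ K] sum_distrib_left)
qed

lemma residual_test_singular_ge:
  fixes U V P Q :: "real mat"
  assumes J: "finite J" and orth_e: "orthonormal_on m J e" and orth_f: "orthonormal_on n J f"
    and orth_p: "orthonormal_on m {..<r} (col_fun P)" and orth_q: "orthonormal_on n {..<r} (col_fun Q)"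
    and \<sigma>: "\<forall>t<r. 0 \<le> \<sigma> t" and S: "card S = r"
    and bal: "\<forall>l\<in>S. (\<Sum>j\<in>J. ip m (e j) (col_fun U l) * ip n (f j) (col_fun V l)) = \<mu>"
  shows "real r * \<mu> - (\<Sum>t<r. \<sigma> t) \<le> (\<Sum>j\<in>J. bilin m n (e j)
      (\<lambda>i i'. (\<Sum>l\<in>S. U $$ (i,l) * V $$ (i',l)) - (\<Sum>t<r. \<sigma> t * P $$ (i,t) * Q $$ (i',t))) (f j))"
proof -
  have "(\<Sum>j\<in>J. ip m (e j) (col_fun P t) * ip n (f j) (col_fun Q t)) \<le> 1" if "t < r" for t
    using Bessel_bilinear_le[OF J orth_e orth_f, of "col_fun P t" "col_fun Q t"] orth_p orth_q that
    unfolding orthonormal_on_def by simp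
  hence "(\<Sum>t<r. \<sigma> t * (\<Sum>j\<in>J. ip m (e j) (col_fun P t) * ip n (f j) (col_fun Q t))) \<le> (\<Sum>t<r. \<sigma> t)"
    using \<sigma> by (intro sum_mono) (simp add: mult_left_le)
  moreover have "(\<Sum>l\<in>S. \<Sum>j\<in>J. ip m (e j) (col_fun U l) * ip n (f j) (col_fun V l)) = real r * \<mu>"
    using bal S by simp
  ultimately show ?thesis unfolding sum_bilin_selection_residual by linarith
qed

lemma residual_test_target_le:
  fixes U V P Q :: "real mat"
  assumes orth_p: "orthonormal_on m {..<r} (col_fun P)" and orth_q: "orthonormal_on n {..<r} (col_fun Q)"
    and S: "card S = r"
    and bal: "\<forall>l\<in>S. sqrt (ip m (col_fun U l) (col_fun U l)) * sqrt (ip n (col_fun V l) (col_fun V l)) = \<mu>"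
  shows "(\<Sum>t<r. bilin m n (col_fun P t)
      (\<lambda>i i'. (\<Sum>l\<in>S. U $$ (i,l) * V $$ (i',l)) - (\<Sum>t<r. \<sigma> t * P $$ (i,t) * Q $$ (i',t))) (col_fun Q t))
    \<le> real r * \<mu> - (\<Sum>t<r. \<sigma> t)"
proof -
  have "(\<Sum>l\<in>S. \<Sum>t<r. ip m (col_fun P t) (col_fun U l) * ip n (col_fun Q t) (col_fun V l)) \<le> (\<Sum>l\<in>S. \<mu>)"
    using Bessel_bilinear_le[OF _ orth_p orth_q] bal by (intro sum_mono) auto
  moreover have "(\<Sum>t'<r. ip m (col_fun P t') (col_fun P t) * ip n (col_fun Q t') (col_fun Q t)) = 1"
    if "t < r" for t
  proof -
    have "(\<Sum>t'<r. ip m (col_fun P t') (col_fun P t) * ip n (col_fun Q t') (col_fun Q t))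
        = (\<Sum>t'<r. if t' = t then 1 else 0)"
      using orth_p orth_q that unfolding orthonormal_on_def by (intro sum.cong) auto
    thus ?thesis using that by simp
  qed
  hence "(\<Sum>t<r. \<sigma> t * (\<Sum>t'<r. ip m (col_fun P t') (col_fun P t) * ip n (col_fun Q t') (col_fun Q t)))
      = (\<Sum>t<r. \<sigma> t)"
    by (intro sum.cong) simp_all
  ultimately show ?thesis using S unfolding sum_bilin_selection_residual by simp
qed

lemma selection_error_lower_bound:
  fixes U V P Q :: "real mat" and \<sigma> :: "nat \<Rightarrow> real"
  assumes k: "0 < k" and r: "r \<le> k"
    and U: "U \<in> carrier_mat m k" and V: "V \<in> carrier_mat n k"
    and P: "P \<in> carrier_mat m k" and Q: "Q \<in> carrier_mat n k"
    and PP: "transpose_mat P * P = 1\<^sub>m k" and QQ: "transpose_mat Q * Q = 1\<^sub>m k"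
    and \<sigma>: "\<forall>t<r. 0 \<le> \<sigma> t"
    and J: "finite J" "card J \<le> k" and orth_e: "orthonormal_on m J e" and orth_f: "orthonormal_on n J f"
    and bal: "\<forall>l<k. sqrt (ip m (col_fun U l) (col_fun U l)) * sqrt (ip n (col_fun V l) (col_fun V l)) = \<mu> \<and>
                    (\<Sum>j\<in>J. ip m (e j) (col_fun U l) * ip n (f j) (col_fun V l)) = \<mu>"
    and S: "S \<subseteq> {..<k}" "card S = r"
  shows "1 / real k * (real r * \<mu> - (\<Sum>t<r. \<sigma> t))\<^sup>2
           \<le> frob_sq (U * Pi_sel k S * transpose_mat V - trunc_approx P Q \<sigma> r)"
proof -
  define Y where "Y i i' = (\<Sum>l\<in>S. U $$ (i,l) * V $$ (i',l)) - (\<Sum>t<r. \<sigma> t * P $$ (i,t) * Q $$ (i',t))" for i i'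
  define E where "E = frob_sq (U * Pi_sel k S * transpose_mat V - trunc_approx P Q \<sigma> r)"
  have E: "E = (\<Sum>i<m. \<Sum>i'<n. (Y i i')\<^sup>2)" unfolding E_def Y_def by (rule frob_sq_selection_residual[OF U V P Q S(1)])
  have test: "(\<Sum>j\<in>K. bilin m n (x j) Y (y j))\<^sup>2 \<le> real k * E"
    if "finite K" "card K \<le> k" "orthonormal_on m K x" "orthonormal_on n K y" for K x y
    using sum_bilin_square_le[OF that(1,3,4), of Y] mult_right_mono[of "card K" k E] that(2)
    unfolding E by (simp add: sum_nonneg)
  have orth_p: "orthonormal_on m {..<r} (col_fun P)" and orth_q: "orthonormal_on n {..<r} (col_fun Q)"
    using orthonormal_on_cols[OF P PP] orthonormal_on_cols[OF Q QQ] r by auto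
  \<comment> \<open>Tested against the singular vectors of \<open>U V\<^sup>T\<close> the residual has mass at least \<open>r \<mu> - \<Sum> \<sigma>\<close>,
    tested against the top \<open>r\<close> singular vectors of \<open>M\<^sup>\<star>\<close> at least \<open>\<Sum> \<sigma> - r \<mu>\<close>.\<close>
  have "real r * \<mu> - (\<Sum>t<r. \<sigma> t) \<le> (\<Sum>j\<in>J. bilin m n (e j) Y (f j))"
    unfolding Y_def using residual_test_singular_ge[OF J(1) orth_e orth_f orth_p orth_q \<sigma> S(2)] bal S(1) by blast
  moreover have "(\<Sum>t<r. bilin m n (col_fun P t) Y (col_fun Q t)) \<le> real r * \<mu> - (\<Sum>t<r. \<sigma> t)"
    unfolding Y_def using residual_test_target_le[OF orth_p orth_q S(2)] bal S(1) by blast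
  ultimately have "(real r * \<mu> - (\<Sum>t<r. \<sigma> t))\<^sup>2 \<le> (\<Sum>j\<in>J. bilin m n (e j) Y (f j))\<^sup>2
      \<or> (real r * \<mu> - (\<Sum>t<r. \<sigma> t))\<^sup>2 \<le> (\<Sum>t<r. bilin m n (col_fun P t) Y (col_fun Q t))\<^sup>2"
    unfolding abs_le_square_iff[symmetric] by linarith
  hence "(real r * \<mu> - (\<Sum>t<r. \<sigma> t))\<^sup>2 \<le> real k * E"
    using test[OF J orth_e orth_f] test[OF _ _ orth_p orth_q] r by fastforce
  thus ?thesis unfolding E_def using k by (simp add: field_simps)
qed

theorem theorem4p2:
  fixes m n k :: nat and P Q U V Mstar :: "real mat" and \<sigma> :: "nat \<Rightarrow> real"
  assumes "m \<ge> 1" and "n \<ge> 1" and "k = min m n"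
    and "P \<in> carrier_mat m k" and "Q \<in> carrier_mat n k"
    and "transpose_mat P * P = 1\<^sub>m k" and "transpose_mat Q * Q = 1\<^sub>m k"
    and "\<And>i j. i < j \<Longrightarrow> j < k \<Longrightarrow> \<sigma> i > \<sigma> j"
    and "\<And>i. i < k \<Longrightarrow> \<sigma> i > 0"
    and "Mstar = P * diag_of k \<sigma> * transpose_mat Q"
    and "U \<in> carrier_mat m k" and "V \<in> carrier_mat n k"
    and "\<And>U' V'. U' \<in> carrier_mat m k \<Longrightarrow> V' \<in> carrier_mat n k \<Longrightarrow>
           dropout_loss k Mstar U V \<le> dropout_loss k Mstar U' V'"
  shows "\<forall>r\<in>{1..k}.
           err_E k U V (trunc_approx P Q \<sigma> r) r
             \<ge> (1 / real k) * (real r * (nuclear_norm (U * transpose_mat V) / real k)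
                                 - (\<Sum>i<r. \<sigma> i))^2"
proof
  fix r assume r: "r \<in> {1..k}"
  have k: "0 < k" using assms(1-3) by simp
  have "diag_of k \<sigma> \<in> carrier_mat k k" unfolding diag_of_def by simp
  hence M: "Mstar \<in> carrier_mat m n" using assms(4,5,10) by (metis mult_carrier_mat transpose_carrier_mat)
  obtain J s e f where svd: "compact_svd (U * transpose_mat V) J s e f" and card: "card J \<le> k"
    and bal: "\<forall>l<k. sqrt (ip m (col_fun U l) (col_fun U l)) * sqrt (ip n (col_fun V l) (col_fun V l))
                      = nuclear_norm (U * transpose_mat V) / real k \<and>
                    (\<Sum>j\<in>J. ip m (e j) (col_fun U l) * ip n (f j) (col_fun V l))
                      = nuclear_norm (U * transpose_mat V) / real k"
    using dropout_minimizer_balanced[OF k _ assms(11,12) M assms(13)] assms(3) by auto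
  have J: "finite J" "orthonormal_on m J e" "orthonormal_on n J f"
    using svd assms(11,12) unfolding compact_svd_def by auto
  let ?E = "\<lambda>S. frob_sq (U * Pi_sel k S * transpose_mat V - trunc_approx P Q \<sigma> r)"
  have "finite {?E S | S. S \<subseteq> {0..<k} \<and> card S = r}" by simp
  moreover have "?E {0..<r} \<in> {?E S | S. S \<subseteq> {0..<k} \<and> card S = r}" using r by auto
  moreover have "1 / real k * (real r * (nuclear_norm (U * transpose_mat V) / real k) - (\<Sum>i<r. \<sigma> i))\<^sup>2 \<le> ?E S"
    if "S \<subseteq> {0..<k}" "card S = r" for S
    using selection_error_lower_bound[OF k _ assms(11,12,4-7) _ J(1) card J(2,3) bal] that r assms(9)
    by (auto simp: atLeast0LessThan less_imp_le)
  ultimately show "err_E k U V (trunc_approx P Q \<sigma> r) r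
      \<ge> 1 / real k * (real r * (nuclear_norm (U * transpose_mat V) / real k) - (\<Sum>i<r. \<sigma> i))\<^sup>2"
    unfolding err_E_def by (subst Min_ge_iff) auto
qed

end
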